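(* Let $G$ be a word hyperbolic group and $0\to\mathbb Z\xrightarrow{\iota}E\xrightarrow{\pi}G\to1$ a central extension, $X$ a finite set mapping onto a symmetric generating set of $E$ (evaluation $w\mapsto\overline w\in E$). Let $C>0$ be an integer such that for every $g\in G$ the maximum $\rho(g):=\max\{\overline w\,\iota(-C\,\mathrm{len}(w)): w\in X^*,\ \pi(\overline w)=g\}$ exists in the ordered fibre $\pi^{-1}(g)$, and such that for some $\lambda>0$ every word achieving this maximum is a $(\lambda,0)$-quasigeodesic in the Cayley graph of $G$ with respect to $\pi(\overline X)$. Let $0\to\mathbb Q\xrightarrow{\iota_{\mathbb Q}}E_{\mathbb Q}\to G\to1$ be the pushout of the extension along $\mathbb Z\subset\mathbb Q$, and define $q:G\to E_{\mathbb Q}$ by $q(g)=\tfrac12\big(\rho(g)+\rho(g^{-1})^{-1}\big)$. Then the cocycle determined by $q$ is bounded: there is a constant $M$ such that the rational number $\tau(g,h)$ defined by $\iota_{\mathbb Q}(\tau(g,h))=q(gh)^{-1}q(g)q(h)$ satisfies $|\tau(g,h)|\le M$ for all $g,h\in G$.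
   Context: Order on a fibre: $h_1\le h_2$ iff $h_2h_1^{-1}=\iota(n)$ with $n\ge0$. $E_{\mathbb Q}=(E\times\mathbb Q)/\{(\iota(n),-n):n\in\mathbb Z\}$, a central extension of $G$ by $\mathbb Q$ containing $E$. For $h_1,h_2$ in the same fibre of $E_{\mathbb Q}\to G$, their average $\tfrac12(h_1+h_2)$ is $h_2\,\iota_{\mathbb Q}(r/2)$ where $\iota_{\mathbb Q}(r)=h_1h_2^{-1}$; note $\rho(g)$ and $\rho(g^{-1})^{-1}$ lie in the same fibre. *)

theory Defs
  imports Complex_Main "HOL-Algebra.Algebra"
begin

definition rat_group :: "rat monoid" where
  "rat_group = \<lparr>carrier = UNIV, monoid.mult = (+), one = (0::rat)\<rparr>"

definition eval_word :: "('e,'m) monoid_scheme \<Rightarrow> ('x \<Rightarrow> 'e) \<Rightarrow> 'x list \<Rightarrow> 'e" where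
  "eval_word E ev w = foldr (\<lambda>x a. ev x \<otimes>\<^bsub>E\<^esub> a) w \<one>\<^bsub>E\<^esub>"

definition word_length :: "('a,'m) monoid_scheme \<Rightarrow> 'a set \<Rightarrow> 'a \<Rightarrow> nat" where
  "word_length G S g =
     (LEAST n. \<exists>ws. set ws \<subseteq> S \<union> m_inv G ` S \<and> length ws = n \<and>
                    foldr (\<lambda>a b. a \<otimes>\<^bsub>G\<^esub> b) ws \<one>\<^bsub>G\<^esub> = g)"

definition word_dist :: "('a,'m) monoid_scheme \<Rightarrow> 'a set \<Rightarrow> 'a \<Rightarrow> 'a \<Rightarrow> nat" where
  "word_dist G S a b = word_length G S (inv\<^bsub>G\<^esub> a \<otimes>\<^bsub>G\<^esub> b)"

definition gromov_product :: "('a,'m) monoid_scheme \<Rightarrow> 'a set \<Rightarrow> 'a \<Rightarrow> 'a \<Rightarrow> 'a \<Rightarrow> real" where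
  "gromov_product G S w x y =
     (real (word_dist G S w x) + real (word_dist G S w y) - real (word_dist G S x y)) / 2"

definition hyperbolic_group :: "('a,'m) monoid_scheme \<Rightarrow> bool" where
  "hyperbolic_group G \<longleftrightarrow> group G \<and>
     (\<exists>S (\<delta>::real). finite S \<and> S \<subseteq> carrier G \<and> generate G S = carrier G \<and>
        (\<forall>w\<in>carrier G. \<forall>x\<in>carrier G. \<forall>y\<in>carrier G. \<forall>z\<in>carrier G.
           gromov_product G S w x z \<ge>
             min (gromov_product G S w x y) (gromov_product G S w y z) - \<delta>))"

definition quasigeodesic_word ::
  "('a,'m) monoid_scheme \<Rightarrow> 'a set \<Rightarrow> ('x \<Rightarrow> 'a) \<Rightarrow> real \<Rightarrow> real \<Rightarrow> 'x list \<Rightarrow> bool" where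
  "quasigeodesic_word G S p lam eps w \<longleftrightarrow>
     (\<forall>i j. i \<le> j \<and> j \<le> length w \<longrightarrow>
        real (j - i) \<le> lam * real (word_dist G S (eval_word G p (take i w)) (eval_word G p (take j w))) + eps)"

definition central_extension ::
  "('e,'m) monoid_scheme \<Rightarrow> ('g,'n) monoid_scheme \<Rightarrow> (int \<Rightarrow> 'e) \<Rightarrow> ('e \<Rightarrow> 'g) \<Rightarrow> bool" where
  "central_extension E G \<iota> \<pi> \<longleftrightarrow> group E \<and> group G \<and>
     \<iota> \<in> hom integer_group E \<and> inj \<iota> \<and>
     \<pi> \<in> hom E G \<and> \<pi> ` carrier E = carrier G \<and>
     range \<iota> = kernel E G \<pi> \<and>
     (\<forall>n. \<forall>e\<in>carrier E. \<iota> n \<otimes>\<^bsub>E\<^esub> e = e \<otimes>\<^bsub>E\<^esub> \<iota> n)"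

definition fibre_le :: "('e,'m) monoid_scheme \<Rightarrow> (int \<Rightarrow> 'e) \<Rightarrow> 'e \<Rightarrow> 'e \<Rightarrow> bool" where
  "fibre_le E \<iota> h1 h2 \<longleftrightarrow> (\<exists>n\<ge>0. h2 \<otimes>\<^bsub>E\<^esub> inv\<^bsub>E\<^esub> h1 = \<iota> n)"

definition is_fibre_max :: "('e,'m) monoid_scheme \<Rightarrow> (int \<Rightarrow> 'e) \<Rightarrow> 'e \<Rightarrow> 'e set \<Rightarrow> bool" where
  "is_fibre_max E \<iota> m A \<longleftrightarrow> m \<in> A \<and> (\<forall>a\<in>A. fibre_le E \<iota> a m)"

definition cost_set ::
  "('e,'m) monoid_scheme \<Rightarrow> (int \<Rightarrow> 'e) \<Rightarrow> ('e \<Rightarrow> 'g) \<Rightarrow> 'x set \<Rightarrow> ('x \<Rightarrow> 'e) \<Rightarrow> int \<Rightarrow> 'g \<Rightarrow> 'e set" where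
  "cost_set E \<iota> \<pi> Xa ev c g =
     (\<lambda>w. eval_word E ev w \<otimes>\<^bsub>E\<^esub> \<iota> (- c * int (length w))) `
       {w. w \<in> lists Xa \<and> \<pi> (eval_word E ev w) = g}"

definition pushout_kernel :: "('e,'m) monoid_scheme \<Rightarrow> (int \<Rightarrow> 'e) \<Rightarrow> ('e \<times> rat) set" where
  "pushout_kernel E \<iota> = (\<lambda>n. (\<iota> n, - of_int n)) ` UNIV"

definition EQ :: "('e,'m) monoid_scheme \<Rightarrow> (int \<Rightarrow> 'e) \<Rightarrow> ('e \<times> rat) set monoid" where
  "EQ E \<iota> = (E \<times>\<times> rat_group) Mod (pushout_kernel E \<iota>)"

definition iotaQ :: "('e,'m) monoid_scheme \<Rightarrow> (int \<Rightarrow> 'e) \<Rightarrow> rat \<Rightarrow> ('e \<times> rat) set" where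
  "iotaQ E \<iota> r = pushout_kernel E \<iota> #>\<^bsub>E \<times>\<times> rat_group\<^esub> (\<one>\<^bsub>E\<^esub>, r)"

definition embQ :: "('e,'m) monoid_scheme \<Rightarrow> (int \<Rightarrow> 'e) \<Rightarrow> 'e \<Rightarrow> ('e \<times> rat) set" where
  "embQ E \<iota> e = pushout_kernel E \<iota> #>\<^bsub>E \<times>\<times> rat_group\<^esub> (e, 0)"

definition fibre_avg ::
  "('e,'m) monoid_scheme \<Rightarrow> (int \<Rightarrow> 'e) \<Rightarrow> ('e \<times> rat) set \<Rightarrow> ('e \<times> rat) set \<Rightarrow> ('e \<times> rat) set" where
  "fibre_avg E \<iota> h1 h2 =
     h2 \<otimes>\<^bsub>EQ E \<iota>\<^esub> iotaQ E \<iota> ((THE r. iotaQ E \<iota> r = h1 \<otimes>\<^bsub>EQ E \<iota>\<^esub> inv\<^bsub>EQ E \<iota>\<^esub> h2) / 2)"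

definition qmap ::
  "('g,'n) monoid_scheme \<Rightarrow> ('e,'m) monoid_scheme \<Rightarrow> (int \<Rightarrow> 'e) \<Rightarrow> ('g \<Rightarrow> 'e) \<Rightarrow> 'g \<Rightarrow> ('e \<times> rat) set" where
  "qmap G E \<iota> \<rho> g =
     fibre_avg E \<iota> (embQ E \<iota> (\<rho> g)) (inv\<^bsub>EQ E \<iota>\<^esub> (embQ E \<iota> (\<rho> (inv\<^bsub>G\<^esub> g))))"

end

theory Submission
  imports Defs
begin

(* Write rho(g h) = rho(g) rho(h) iota(F(g, h)). Maximality of rho makes F a non-negative normalised
   cocycle, and q(g) = rho(g) iotaQ(F(g, g^-1) / 2), so the cocycle of q is half of
   F(g, g^-1) + F(h, h^-1) - F(g h, (g h)^-1) - 2 F(g, h).  For an arbitrary point x this is a signed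
   sum of six split defects F(u, u^-1 a), one for each side of the triangle 1, g, g h read in each
   direction.  A split defect vanishes when u is a vertex of the path of a maximal word for a, and
   otherwise is at most a constant times the distance from u to such a vertex.  Maximal words are
   quasigeodesics, so by the Morse lemma they stay uniformly close to geodesics; choosing x at the
   centre of a thin geodesic triangle makes all six distances uniformly small. *)

section \<open>Words and word metrics\<close>

lemma (in group) inv_mult_cancel [simp]: "x \<in> carrier G \<Longrightarrow> y \<in> carrier G \<Longrightarrow> inv x \<otimes> (x \<otimes> y) = y"
  by (simp add: m_assoc[symmetric])

lemma (in group) mult_inv_cancel [simp]: "x \<in> carrier G \<Longrightarrow> y \<in> carrier G \<Longrightarrow> x \<otimes> (inv x \<otimes> y) = y"
  by (simp add: m_assoc[symmetric])

lemma eval_word_Nil [simp]: "eval_word E ev [] = \<one>\<^bsub>E\<^esub>"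
  by (simp add: eval_word_def)

lemma eval_word_Cons [simp]: "eval_word E ev (x # w) = ev x \<otimes>\<^bsub>E\<^esub> eval_word E ev w"
  by (simp add: eval_word_def)

lemma (in monoid) eval_word_closed: "ev ` set w \<subseteq> carrier G \<Longrightarrow> eval_word G ev w \<in> carrier G"
  by (induction w) auto

lemma (in monoid) eval_word_append:
  "ev ` set u \<subseteq> carrier G \<Longrightarrow> ev ` set v \<subseteq> carrier G \<Longrightarrow>
   eval_word G ev (u @ v) = eval_word G ev u \<otimes> eval_word G ev v"
  by (induction u) (auto simp: m_assoc eval_word_closed)

abbreviation word_prod :: "('a, 'm) monoid_scheme \<Rightarrow> 'a list \<Rightarrow> 'a" where
  "word_prod G \<equiv> eval_word G (\<lambda>a. a)"

lemma (in monoid) word_prod_append: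
  "set u \<subseteq> carrier G \<Longrightarrow> set v \<subseteq> carrier G \<Longrightarrow>
   word_prod G (u @ v) = word_prod G u \<otimes> word_prod G v"
  by (simp add: eval_word_append)

lemma (in group_hom) eval_word_hom:
  "ev ` set w \<subseteq> carrier G \<Longrightarrow> h (eval_word G ev w) = eval_word H (h \<circ> ev) w"
  by (induction w) (auto simp: G.eval_word_closed)

locale word_metric = group +
  fixes S :: "'a set"
  assumes gens_closed: "S \<subseteq> carrier G" and gens_generate: "generate G S = carrier G"
begin

abbreviation letters where "letters \<equiv> S \<union> m_inv G ` S"
abbreviation wlen where "wlen \<equiv> word_length G S"
abbreviation wdist where "wdist \<equiv> word_dist G S"

lemma letters_closed: "letters \<subseteq> carrier G"
  using gens_closed by auto

lemma word_prod_rev_inv: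
  "set ws \<subseteq> carrier G \<Longrightarrow> word_prod G (rev (map (m_inv G) ws)) = inv (word_prod G ws)"
proof (induction ws)
  case (Cons a ws)
  have "set (rev (map (m_inv G) ws)) \<subseteq> carrier G" "inv a \<in> carrier G" using Cons.prems by auto
  then show ?case using Cons by (simp add: word_prod_append eval_word_closed inv_mult_group)
qed simp

lemma letter_word_exists: "g \<in> carrier G \<Longrightarrow> \<exists>ws. set ws \<subseteq> letters \<and> word_prod G ws = g"
  unfolding gens_generate[symmetric]
proof (induction rule: generate.induct)
  case one
  show ?case by (auto intro: exI[of _ "[]"])
next
  case (incl h)
  then show ?case using gens_closed by (auto intro!: exI[of _ "[h]"])
next
  case (inv h)
  then show ?case using gens_closed by (auto intro!: exI[of _ "[inv h]"])
next
  case (eng h1 h2)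
  then obtain w1 w2 where w: "set w1 \<subseteq> letters" "word_prod G w1 = h1"
    "set w2 \<subseteq> letters" "word_prod G w2 = h2" by blast
  then have "word_prod G (w1 @ w2) = h1 \<otimes> h2"
    using letters_closed by (simp add: word_prod_append subset_trans)
  then show ?case using w by (intro exI[of _ "w1 @ w2"]) auto
qed

lemma word_length_eq_Least:
  "wlen g = (LEAST n. \<exists>ws. set ws \<subseteq> letters \<and> length ws = n \<and> word_prod G ws = g)"
  unfolding word_length_def eval_word_def by simp

lemma shortest_word_exists:
  assumes "g \<in> carrier G"
  shows "\<exists>ws. set ws \<subseteq> letters \<and> length ws = wlen g \<and> word_prod G ws = g"
proof -
  obtain ws where "set ws \<subseteq> letters" "word_prod G ws = g"
    using letter_word_exists[OF assms] by blast
  then have "\<exists>n ws. set ws \<subseteq> letters \<and> length ws = n \<and> word_prod G ws = g" by blast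
  from LeastI_ex[OF this] show ?thesis unfolding word_length_eq_Least .
qed

lemma word_length_le_length: "set ws \<subseteq> letters \<Longrightarrow> wlen (word_prod G ws) \<le> length ws"
  unfolding word_length_eq_Least by (rule Least_le) blast

lemma word_length_one [simp]: "wlen \<one> = 0"
  using word_length_le_length[of "[]"] by simp

lemma word_length_mult_le:
  assumes "x \<in> carrier G" "y \<in> carrier G"
  shows "wlen (x \<otimes> y) \<le> wlen x + wlen y"
proof -
  obtain u v where "set u \<subseteq> letters" "length u = wlen x" "word_prod G u = x"
    and "set v \<subseteq> letters" "length v = wlen y" "word_prod G v = y"
    using shortest_word_exists assms by meson
  with word_length_le_length[of "u @ v"] show ?thesis
    using letters_closed by (simp add: word_prod_append subset_trans)
qed

lemma word_length_inv_le:
  assumes x: "x \<in> carrier G"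
  shows "wlen (inv x) \<le> wlen x"
proof -
  obtain u where u: "set u \<subseteq> letters" "length u = wlen x" "word_prod G u = x"
    using shortest_word_exists[OF x] by blast
  have "set (rev (map (m_inv G) u)) \<subseteq> letters"
  proof
    fix y assume "y \<in> set (rev (map (m_inv G) u))"
    then obtain z where z: "z \<in> set u" "y = inv z" by auto
    then have "z \<in> letters" using u(1) by blast
    then show "y \<in> letters" using z(2) gens_closed by auto
  qed
  moreover have "word_prod G (rev (map (m_inv G) u)) = inv x"
    using u letters_closed word_prod_rev_inv by blast
  ultimately show ?thesis using word_length_le_length[of "rev (map (m_inv G) u)"] u(2) by simp
qed

lemma word_length_inv: "x \<in> carrier G \<Longrightarrow> wlen (inv x) = wlen x"
  using word_length_inv_le[of x] word_length_inv_le[of "inv x"] by simp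

lemma word_dist_self [simp]: "x \<in> carrier G \<Longrightarrow> wdist x x = 0"
  by (simp add: word_dist_def)

lemma word_dist_sym: "x \<in> carrier G \<Longrightarrow> y \<in> carrier G \<Longrightarrow> wdist x y = wdist y x"
  using word_length_inv[of "inv x \<otimes> y"] by (simp add: word_dist_def inv_mult_group)

lemma word_dist_triangle:
  assumes "x \<in> carrier G" "y \<in> carrier G" "z \<in> carrier G"
  shows "wdist x z \<le> wdist x y + wdist y z"
proof -
  have "inv x \<otimes> z = (inv x \<otimes> y) \<otimes> (inv y \<otimes> z)"
    using assms by (simp add: m_assoc[symmetric]) (simp add: m_assoc)
  then show ?thesis using word_length_mult_le assms by (simp add: word_dist_def)
qed

lemma word_dist_mult_left:
  "z \<in> carrier G \<Longrightarrow> x \<in> carrier G \<Longrightarrow> y \<in> carrier G \<Longrightarrow> wdist (z \<otimes> x) (z \<otimes> y) = wdist x y"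
  unfolding word_dist_def by (simp add: inv_mult_group m_assoc[symmetric]) (simp add: m_assoc)

definition geodesic :: "(nat \<Rightarrow> 'a) \<Rightarrow> 'a \<Rightarrow> 'a \<Rightarrow> bool" where
  "geodesic \<gamma> x y \<longleftrightarrow> \<gamma> 0 = x \<and> \<gamma> (wdist x y) = y \<and> (\<forall>i \<le> wdist x y. \<gamma> i \<in> carrier G) \<and>
     (\<forall>i j. i \<le> j \<longrightarrow> j \<le> wdist x y \<longrightarrow> wdist (\<gamma> i) (\<gamma> j) = j - i)"

lemma geodesic_closed: "geodesic \<gamma> x y \<Longrightarrow> i \<le> wdist x y \<Longrightarrow> \<gamma> i \<in> carrier G"
  unfolding geodesic_def by blast

lemma geodesic_dist: "geodesic \<gamma> x y \<Longrightarrow> i \<le> j \<Longrightarrow> j \<le> wdist x y \<Longrightarrow> wdist (\<gamma> i) (\<gamma> j) = j - i"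
  unfolding geodesic_def by blast

lemma geodesic_dist':
  "geodesic \<gamma> x y \<Longrightarrow> i \<le> j \<Longrightarrow> j \<le> wdist x y \<Longrightarrow> wdist (\<gamma> j) (\<gamma> i) = j - i"
  using geodesic_dist geodesic_closed word_dist_sym by (metis le_trans)

lemma geodesic_exists:
  assumes x: "x \<in> carrier G" and y: "y \<in> carrier G"
  shows "\<exists>\<gamma>. geodesic \<gamma> x y"
proof -
  obtain ws where ws: "set ws \<subseteq> letters" "length ws = wdist x y" "word_prod G ws = inv x \<otimes> y"
    using shortest_word_exists[of "inv x \<otimes> y"] x y by (auto simp: word_dist_def)
  have sub_closed: "set (take k (drop i ws)) \<subseteq> carrier G" "set (drop i ws) \<subseteq> carrier G"
    "set (take i ws) \<subseteq> carrier G" for i k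
    using ws(1) letters_closed by (meson order.trans set_drop_subset set_take_subset)+
  define \<gamma> where "\<gamma> i = x \<otimes> word_prod G (take i ws)" for i
  have closed: "\<gamma> i \<in> carrier G" for i using x sub_closed by (simp add: \<gamma>_def eval_word_closed)
  have ends: "\<gamma> 0 = x" "\<gamma> (wdist x y) = y" using x y ws by (simp_all add: \<gamma>_def m_assoc[symmetric])
  have short: "wdist (\<gamma> i) (\<gamma> j) \<le> j - i" if "i \<le> j" for i j
  proof -
    let ?u = "take (j - i) (drop i ws)"
    have "take j ws = take i ws @ ?u" using that by (metis le_add_diff_inverse take_add)
    then have "\<gamma> j = \<gamma> i \<otimes> word_prod G ?u"
      using x sub_closed by (simp add: \<gamma>_def word_prod_append eval_word_closed m_assoc)
    then have "inv (\<gamma> i) \<otimes> \<gamma> j = word_prod G ?u"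
      using closed sub_closed by (simp add: m_assoc[symmetric] eval_word_closed)
    moreover have "set ?u \<subseteq> letters" using ws(1) by (meson set_drop_subset set_take_subset subset_trans)
    ultimately show ?thesis
      unfolding word_dist_def using word_length_le_length[of ?u] by simp
  qed
  have "wdist (\<gamma> i) (\<gamma> j) = j - i" if "i \<le> j" "j \<le> wdist x y" for i j
  proof -
    have "wdist x y \<le> wdist (\<gamma> 0) (\<gamma> i) + wdist (\<gamma> i) (\<gamma> j) + wdist (\<gamma> j) (\<gamma> (wdist x y))"
      using word_dist_triangle[of "\<gamma> 0" "\<gamma> i" "\<gamma> (wdist x y)"]
        word_dist_triangle[of "\<gamma> i" "\<gamma> j" "\<gamma> (wdist x y)"] closed ends x y by simp
    then show ?thesis using short[of 0 i] short[of j "wdist x y"] short[OF that(1)] that by linarith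
  qed
  then show ?thesis unfolding geodesic_def using ends closed by blast
qed

lemma geodesic_reverse:
  assumes \<gamma>: "geodesic \<gamma> x y" and "x \<in> carrier G" "y \<in> carrier G"
  shows "geodesic (\<lambda>i. \<gamma> (wdist x y - i)) y x"
  unfolding geodesic_def word_dist_sym[OF assms(2,3), symmetric]
  using geodesic_dist'[OF \<gamma>] \<gamma> by (auto simp: geodesic_def)

definition coarse_quasigeodesic :: "(nat \<Rightarrow> 'a) \<Rightarrow> nat \<Rightarrow> nat \<Rightarrow> real \<Rightarrow> bool" where
  "coarse_quasigeodesic c m K L \<longleftrightarrow> (\<forall>l \<le> m. c l \<in> carrier G) \<and>
     (\<forall>l < m. wdist (c l) (c (Suc l)) \<le> K) \<and>
     (\<forall>l l'. l \<le> l' \<longrightarrow> l' \<le> m \<longrightarrow> real (l' - l) \<le> L * real (wdist (c l) (c l')))"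

end

lemma word_length_le_mult_word_length:
  assumes A: "word_metric G A" and B: "word_metric G B" and "finite B"
  shows "\<exists>K. \<forall>g\<in>carrier G. word_length G A g \<le> K * word_length G B g"
proof -
  interpret A: word_metric G A by (rule A)
  interpret B: word_metric G B by (rule B)
  define K where "K = Max (word_length G A ` B.letters)"
  have letter_le: "word_length G A b \<le> K" if "b \<in> B.letters" for b
    unfolding K_def using \<open>finite B\<close> that by (intro Max_ge) auto
  have word_le: "word_length G A (word_prod G ws) \<le> K * length ws" if "set ws \<subseteq> B.letters" for ws
    using that
  proof (induction ws)
    case (Cons b ws)
    have "set (b # ws) \<subseteq> carrier G" using Cons.prems B.letters_closed by blast
    then have "b \<in> carrier G" "word_prod G ws \<in> carrier G" by (auto intro: A.eval_word_closed)
    then have "word_length G A (word_prod G (b # ws)) \<le> word_length G A b + word_length G A (word_prod G ws)"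
      using A.word_length_mult_le by simp
    also have "\<dots> \<le> K + K * length ws" using Cons letter_le by (intro add_mono) auto
    finally show ?case by simp
  qed simp
  show ?thesis
    using B.shortest_word_exists word_le by metis
qed

section \<open>Hyperbolic word metrics\<close>

lemma square_le_four_pow2: "real k * real k \<le> 4 * 2 ^ k"
proof (induction k)
  case (Suc k)
  have "Suc k \<le> 2 ^ k" using less_exp[of k] by (simp only: Suc_le_eq)
  then have "real k + 1 \<le> 2 ^ k"
    by (metis of_nat_Suc of_nat_le_iff of_nat_numeral of_nat_power add.commute)
  then show ?case using Suc by (simp add: algebra_simps)
qed simp

lemma linear_bound_of_pow2_lt:
  fixes a b :: real
  assumes "a \<ge> 0" "b \<ge> 0" "k \<ge> 1" "2 ^ (k - 1) < a + b * real k"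
  shows "real k < 8 * (a + b) + 8"
proof (rule ccontr)
  assume "\<not> ?thesis"
  then have k: "real k \<ge> 8 * (a + b) + 8" by simp
  have "2 ^ k = 2 * (2::real) ^ (k - 1)"
    using assms(3) by (metis One_nat_def Suc_pred less_eq_Suc_le power_Suc)
  then have "real k * real k \<le> 8 * 2 ^ (k - 1)" using square_le_four_pow2[of k] by simp
  moreover have "real k * real k \<ge> real k * (8 * (a + b) + 8)" using k by (intro mult_left_mono) auto
  moreover have "real k * a \<ge> a" using mult_right_mono[of 1 "real k" a] assms by auto
  moreover have "real k \<ge> 1" using assms by auto
  ultimately have "8 * 2 ^ (k - 1) \<ge> 8 * (a + b * real k) + 8" by (simp add: algebra_simps)
  then show False using assms(4) by simp
qed

text \<open>If \<open>D \<le> K + k \<delta>\<close> for every \<open>k\<close> with \<open>2^k \<ge> 6 L D + 2\<close>, then the least such \<open>k\<close> satisfies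
  \<open>2^(k-1) < 6 L (K + k \<delta>) + 2\<close>; this bounds \<open>k\<close>, and hence \<open>D\<close>, independently of \<open>D\<close>.\<close>

definition morse_const :: "real \<Rightarrow> real \<Rightarrow> real \<Rightarrow> real" where
  "morse_const K L \<delta> = K + \<delta> * (8 * ((6 * L * K + 2) + 6 * L * \<delta>) + 8)"

lemma le_morse_const:
  fixes D K L \<delta> :: real
  assumes "D \<ge> 0" "L \<ge> 0" "\<delta> \<ge> 0" "K \<ge> 0"
    and H: "\<And>k::nat. 6 * L * D + 2 \<le> 2 ^ k \<Longrightarrow> D \<le> K + real k * \<delta>"
  shows "D \<le> morse_const K L \<delta>"
proof -
  have "\<exists>k::nat. 6 * L * D + 2 \<le> 2 ^ k"
  proof -
    obtain k :: nat where "6 * L * D + 2 \<le> real k" using real_arch_simple by blast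
    moreover have "real k \<le> 2 ^ k"
      using less_exp[of k] by (metis less_imp_le of_nat_le_iff of_nat_numeral of_nat_power)
    ultimately show ?thesis by (intro exI[of _ k]) linarith
  qed
  define k where "k = (LEAST k::nat. 6 * L * D + 2 \<le> 2 ^ k)"
  have "6 * L * D + 2 \<le> 2 ^ k" unfolding k_def by (rule LeastI_ex) fact
  then have Dk: "D \<le> K + real k * \<delta>" by (rule H)
  have "real k \<le> 8 * ((6 * L * K + 2) + 6 * L * \<delta>) + 8"
  proof (cases "k = 0")
    case False
    then have "2 ^ (k - 1) < 6 * L * D + 2"
      using not_less_Least[of "k - 1" "\<lambda>k. 6 * L * D + 2 \<le> 2 ^ k"] by (simp add: k_def)
    also have "\<dots> \<le> 6 * L * (K + real k * \<delta>) + 2"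
      using Dk assms by (intro add_mono mult_left_mono) auto
    also have "\<dots> = (6 * L * K + 2) + (6 * L * \<delta>) * real k" by (simp add: algebra_simps)
    finally have "real k < 8 * ((6 * L * K + 2) + 6 * L * \<delta>) + 8"
      using False assms by (intro linear_bound_of_pow2_lt) auto
    then show ?thesis by simp
  qed (use assms in auto)
  then have "real k * \<delta> \<le> \<delta> * (8 * ((6 * L * K + 2) + 6 * L * \<delta>) + 8)"
    using assms(3) by (simp add: mult.commute mult_left_mono)
  then show ?thesis using Dk by (simp add: morse_const_def)
qed

locale hyperbolic_word_metric = word_metric +
  fixes \<delta> :: real
  assumes delta_nonneg: "\<delta> \<ge> 0"
    and four_point: "\<And>w x y z. w \<in> carrier G \<Longrightarrow> x \<in> carrier G \<Longrightarrow> y \<in> carrier G \<Longrightarrow> z \<in> carrier G \<Longrightarrow>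
        gromov_product G S w x z \<ge> min (gromov_product G S w x y) (gromov_product G S w y z) - \<delta>"
begin

abbreviation gp where "gp \<equiv> gromov_product G S"

lemma gromov_product_sym: "x \<in> carrier G \<Longrightarrow> y \<in> carrier G \<Longrightarrow> gp w x y = gp w y x"
  unfolding gromov_product_def using word_dist_sym by simp

lemma gromov_product_bounds:
  assumes "w \<in> carrier G" "x \<in> carrier G" "y \<in> carrier G"
  shows "real (wdist w x) - real (wdist x y) \<le> gp w x y"
    and "real (wdist w y) - real (wdist x y) \<le> gp w x y"
    and "gp w x y \<le> real (wdist w x)"
    and "gp w x y \<le> real (wdist w y)"
proof -
  have "wdist w x \<le> wdist w y + wdist y x" "wdist w y \<le> wdist w x + wdist x y"
    using word_dist_triangle assms by blast+
  then show "real (wdist w x) - real (wdist x y) \<le> gp w x y"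
    and "real (wdist w y) - real (wdist x y) \<le> gp w x y"
    and "gp w x y \<le> real (wdist w x)"
    and "gp w x y \<le> real (wdist w y)"
    unfolding gromov_product_def using word_dist_sym assms by simp_all
qed

lemma gromov_product_nonneg:
  assumes "w \<in> carrier G" "x \<in> carrier G" "y \<in> carrier G"
  shows "0 \<le> gp w x y"
  using word_dist_triangle[of x w y] word_dist_sym[of w x] assms unfolding gromov_product_def by simp

lemma geodesic_gromov_product_start:
  assumes "geodesic \<gamma> x y" "t \<le> wdist x y"
  shows "gp x (\<gamma> t) y = real t"
  using geodesic_dist[OF assms(1), of 0 t] geodesic_dist[OF assms(1), of t "wdist x y"] assms
  by (simp add: gromov_product_def geodesic_def of_nat_diff)

lemma geodesic_gromov_product_zero:
  assumes "geodesic \<gamma> x y" "i \<le> j" "j \<le> k" "k \<le> wdist x y"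
  shows "gp (\<gamma> j) (\<gamma> i) (\<gamma> k) = 0"
  using geodesic_dist[OF assms(1), of i k] geodesic_dist[OF assms(1), of j k]
    geodesic_dist'[OF assms(1), of i j] assms
  by (simp add: gromov_product_def of_nat_diff)

lemma gromov_product_chain:
  assumes "z \<in> carrier G"
  shows "\<forall>i \<le> n. p i \<in> carrier G \<Longrightarrow> 1 \<le> n \<Longrightarrow> n \<le> 2 ^ k \<Longrightarrow>
    \<forall>i < n. gp z (p i) (p (Suc i)) \<ge> m \<Longrightarrow> gp z (p 0) (p n) \<ge> m - real k * \<delta>"
proof (induction k arbitrary: p n)
  case 0
  then have "n = 1" by simp
  then show ?case using 0 by auto
next
  case (Suc k)
  show ?case
  proof (cases "n \<le> 2 ^ k")
    case True
    then have "gp z (p 0) (p n) \<ge> m - real k * \<delta>" using Suc by blast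
    then show ?thesis using delta_nonneg by (simp add: algebra_simps)
  next
    case False
    define h where "h = (2::nat) ^ k"
    have h: "1 \<le> h" "h < n" "n - h \<le> 2 ^ k" using False Suc.prems(3) by (auto simp: h_def)
    have "gp z (p 0) (p h) \<ge> m - real k * \<delta>"
      using Suc.IH[of h p] Suc.prems h by (auto simp: h_def)
    moreover have "gp z (p (h + 0)) (p (h + (n - h))) \<ge> m - real k * \<delta>"
      using Suc.IH[of "n - h" "\<lambda>i. p (h + i)"] Suc.prems h by auto
    moreover have "gp z (p 0) (p n) \<ge> min (gp z (p 0) (p h)) (gp z (p h) (p n)) - \<delta>"
      using four_point assms Suc.prems h by simp
    ultimately show ?thesis using h by (simp add: algebra_simps)
  qed
qed

lemma geodesics_fellow_travel:
  assumes \<alpha>: "geodesic \<alpha> p q" and \<beta>: "geodesic \<beta> p r"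
    and pqr: "p \<in> carrier G" "q \<in> carrier G" "r \<in> carrier G" and t: "real t \<le> gp p q r"
  shows "real (wdist (\<alpha> t) (\<beta> t)) \<le> 4 * \<delta>"
proof -
  have t_le: "t \<le> wdist p q" "t \<le> wdist p r" using t gromov_product_bounds(3,4)[OF pqr] by linarith+
  have uv: "\<alpha> t \<in> carrier G" "\<beta> t \<in> carrier G" using t_le geodesic_closed \<alpha> \<beta> by auto
  have "gp p (\<alpha> t) q = t" using geodesic_gromov_product_start[OF \<alpha> t_le(1)] .
  then have "gp p (\<alpha> t) r \<ge> t - \<delta>"
    using four_point[of p "\<alpha> t" q r] pqr uv t by (simp add: min_def split: if_splits)
  moreover have "gp p r (\<beta> t) = t"
    using geodesic_gromov_product_start[OF \<beta> t_le(2)] gromov_product_sym pqr uv by simp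
  ultimately have gp_uv: "gp p (\<alpha> t) (\<beta> t) \<ge> t - 2 * \<delta>"
    using four_point[of p "\<alpha> t" r "\<beta> t"] pqr uv delta_nonneg by (simp add: min_def split: if_splits)
  have "wdist p (\<alpha> t) = t" "wdist p (\<beta> t) = t"
    using geodesic_dist[OF \<alpha>, of 0 t] geodesic_dist[OF \<beta>, of 0 t] \<alpha> \<beta> t_le by (auto simp: geodesic_def)
  then have "real (wdist (\<alpha> t) (\<beta> t)) = 2 * real t - 2 * gp p (\<alpha> t) (\<beta> t)"
    by (simp add: gromov_product_def field_simps)
  also have "\<dots> \<le> 4 * \<delta>" using gp_uv by simp
  finally show ?thesis .
qed

definition near_geodesic :: "'a \<Rightarrow> 'a \<Rightarrow> 'a \<Rightarrow> real \<Rightarrow> bool" where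
  "near_geodesic x p q r \<longleftrightarrow> (\<exists>\<gamma> s. geodesic \<gamma> p q \<and> s \<le> wdist p q \<and> real (wdist x (\<gamma> s)) \<le> r)"

lemma near_geodesic_sym:
  assumes "p \<in> carrier G" "q \<in> carrier G" "near_geodesic x p q r"
  shows "near_geodesic x q p r"
proof -
  obtain \<gamma> s where \<gamma>: "geodesic \<gamma> p q" "s \<le> wdist p q" "real (wdist x (\<gamma> s)) \<le> r"
    using assms(3) by (auto simp: near_geodesic_def)
  let ?\<gamma>' = "\<lambda>i. \<gamma> (wdist p q - i)"
  have "geodesic ?\<gamma>' q p" using geodesic_reverse \<gamma>(1) assms(1,2) by blast
  moreover have "wdist p q - s \<le> wdist q p" using word_dist_sym assms(1,2) by simp
  moreover have "?\<gamma>' (wdist p q - s) = \<gamma> s" using \<gamma>(2) by simp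
  ultimately show ?thesis
    unfolding near_geodesic_def using \<gamma>(3) by (intro exI[of _ ?\<gamma>'] exI[of _ "wdist p q - s"]) simp
qed

text \<open>The centre of a geodesic triangle is the point of \<open>[p, q]\<close> at distance \<open>\<lfloor>(q|w)\<^sub>p\<rfloor>\<close> from \<open>p\<close>;
  seen from \<open>q\<close> it lies at distance \<open>\<lfloor>(p|w)\<^sub>q\<rfloor>\<close> or one more, since the two Gromov products add up
  to \<open>d(p, q)\<close>.\<close>

lemma geodesic_triangle_centre:
  assumes p: "p \<in> carrier G" and q: "q \<in> carrier G" and w: "w \<in> carrier G"
  shows "\<exists>x\<in>carrier G. near_geodesic x p q (4 * \<delta> + 1) \<and> near_geodesic x q w (4 * \<delta> + 1) \<and>
           near_geodesic x p w (4 * \<delta> + 1)"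
proof -
  obtain \<alpha> \<beta> \<gamma> where \<alpha>: "geodesic \<alpha> p q" and \<beta>: "geodesic \<beta> q w" and \<gamma>: "geodesic \<gamma> p w"
    using geodesic_exists p q w by metis
  define a where "a = wdist p q"
  define t where "t = nat \<lfloor>gp p q w\<rfloor>"
  define t' where "t' = nat \<lfloor>gp q p w\<rfloor>"
  have sum: "gp p q w + gp q p w = a"
    unfolding gromov_product_def a_def using word_dist_sym p q by (simp add: field_simps)
  have nonneg: "gp p q w \<ge> 0" "gp q p w \<ge> 0"
    using gromov_product_nonneg p q w by auto
  have t: "real t \<le> gp p q w" and t': "real t' \<le> gp q p w"
    using nonneg by (auto simp: t_def t'_def)
  have tt': "t + t' \<le> a" "a \<le> t + t' + 1"
    using sum nonneg unfolding t_def t'_def by linarith+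
  define x where "x = \<alpha> t"
  have x: "x \<in> carrier G" using \<alpha> tt' by (auto simp: x_def a_def intro: geodesic_closed)
  have "near_geodesic x p q (4 * \<delta> + 1)"
    unfolding near_geodesic_def using \<alpha> x tt' delta_nonneg
    by (intro exI[of _ \<alpha>] exI[of _ t]) (auto simp: x_def a_def)
  moreover have "near_geodesic x p w (4 * \<delta> + 1)"
    unfolding near_geodesic_def using \<gamma> geodesics_fellow_travel[OF \<alpha> \<gamma> p q w t] t
      gromov_product_bounds(4)[OF p q w] by (intro exI[of _ \<gamma>] exI[of _ t]) (auto simp: x_def)
  moreover have "near_geodesic x q w (4 * \<delta> + 1)"
  proof -
    let ?\<alpha>' = "\<lambda>i. \<alpha> (a - i)"
    have \<alpha>': "geodesic ?\<alpha>' q p" using geodesic_reverse[OF \<alpha> p q] by (simp add: a_def)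
    have "real (wdist (?\<alpha>' t') (\<beta> t')) \<le> 4 * \<delta>"
      by (rule geodesics_fellow_travel[OF \<alpha>' \<beta> q p w t'])
    moreover have "wdist x (?\<alpha>' t') \<le> 1"
    proof -
      have "wdist x (?\<alpha>' t') = a - t' - t"
        using geodesic_dist[OF \<alpha>, of t "a - t'"] tt' by (simp add: x_def a_def)
      then show ?thesis using tt' by simp
    qed
    moreover have "t' \<le> wdist q w" "?\<alpha>' t' \<in> carrier G" "\<beta> t' \<in> carrier G"
      using t' gromov_product_bounds(4)[OF q p w] geodesic_closed[OF \<alpha>'] geodesic_closed[OF \<beta>]
        word_dist_sym p q tt' by (auto simp: a_def)
    ultimately show ?thesis
      unfolding near_geodesic_def using \<beta> word_dist_triangle[OF x, of "?\<alpha>' t'" "\<beta> t'"]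
      by (intro exI[of _ \<beta>] exI[of _ t']) auto
  qed
  ultimately show ?thesis using x by blast
qed

text \<open>A path from \<open>a\<close> to \<open>b\<close> that detours through \<open>c l, \<dots>, c l'\<close>, all at distance \<open>\<ge> D\<close> from
  \<open>z\<close>, has Gromov products \<open>\<ge> D - K\<close> at every step; if \<open>(a|b)\<^sub>z \<le> 0\<close>, the chain estimate
  then forces \<open>D \<le> K + k \<delta>\<close> as soon as the path has at most \<open>2^k\<close> steps.\<close>

lemma detour_bound:
  assumes z: "z \<in> carrier G" and a: "a \<in> carrier G" and b: "b \<in> carrier G" and gp_ab: "gp z a b \<le> 0"
    and c: "\<And>i. l \<le> i \<Longrightarrow> i \<le> l' \<Longrightarrow> c i \<in> carrier G" and ll': "l \<le> l'"
    and jump: "\<And>i. l \<le> i \<Longrightarrow> i < l' \<Longrightarrow> wdist (c i) (c (Suc i)) \<le> K"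
    and far: "\<And>i. l \<le> i \<Longrightarrow> i \<le> l' \<Longrightarrow> D \<le> real (wdist z (c i))"
    and start: "D \<le> real (wdist z a) - real (wdist a (c l))"
    and stop: "D \<le> real (wdist z b) - real (wdist b (c l'))"
    and k: "l' - l + 2 \<le> 2 ^ k"
  shows "D \<le> real K + real k * \<delta>"
proof -
  define n where "n = l' - l + 2"
  define q where "q i = (if i = 0 then a else if i < n then c (l + i - 1) else b)" for i
  have cl: "c l \<in> carrier G" "c l' \<in> carrier G" using c ll' by auto
  have q_closed: "\<forall>i \<le> n. q i \<in> carrier G" using a b c ll' by (auto simp: q_def n_def)
  have "\<forall>i < n. D - real K \<le> gp z (q i) (q (Suc i))"
  proof (intro allI impI)
    fix i assume "i < n"
    then consider "i = 0" | "i = n - 1" "i \<noteq> 0" | "0 < i" "i < n - 1" by linarith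
    then show "D - real K \<le> gp z (q i) (q (Suc i))"
    proof cases
      case 1
      then have "q i = a" "q (Suc i) = c l" by (auto simp: q_def n_def)
      then show ?thesis using gromov_product_bounds(1)[OF z a cl(1)] start by simp
    next
      case 2
      then have "q i = c l'" "q (Suc i) = b" using ll' by (auto simp: q_def n_def)
      then show ?thesis using gromov_product_bounds(2)[OF z cl(2) b] stop word_dist_sym[OF b cl(2)] by simp
    next
      case 3
      define j where "j = l + i - 1"
      have j: "l \<le> j" "j < l'" using 3 by (auto simp: j_def n_def)
      have cj: "c j \<in> carrier G" "c (Suc j) \<in> carrier G" using c j by auto
      have "q i = c j" "q (Suc i) = c (Suc j)" using 3 by (auto simp: q_def j_def n_def)
      then show ?thesis
        using gromov_product_bounds(1)[OF z cj] far[of j] jump[of j] j by simp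
    qed
  qed
  then have "D - real K - real k * \<delta> \<le> gp z (q 0) (q n)"
    using gromov_product_chain[OF z q_closed, of k] k by (simp add: n_def)
  then show ?thesis using gp_ab by (simp add: q_def n_def)
qed

lemma quasigeodesic_detour_bound:
  fixes D :: nat
  assumes c: "coarse_quasigeodesic c m K L" and L: "L \<ge> 0"
    and z: "z \<in> carrier G" and a: "a \<in> carrier G" and b: "b \<in> carrier G" and gp_ab: "gp z a b \<le> 0"
    and l12: "l1 \<le> m" "l2 \<le> m" and dist: "wdist (c l1) (c l2) \<le> 6 * D"
    and far: "\<And>l. l \<le> m \<Longrightarrow> D \<le> wdist z (c l)"
    and start: "real D \<le> real (wdist z a) - real (wdist a (c l1))"
    and stop: "real D \<le> real (wdist z b) - real (wdist b (c l2))"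
    and k: "6 * L * D + 2 \<le> 2 ^ k"
  shows "real D \<le> real K + real k * \<delta>"
proof -
  have c_closed: "\<And>l. l \<le> m \<Longrightarrow> c l \<in> carrier G"
    and jump: "\<And>l. l < m \<Longrightarrow> wdist (c l) (c (Suc l)) \<le> K"
    and qg: "\<And>l l'. l \<le> l' \<Longrightarrow> l' \<le> m \<Longrightarrow> real (l' - l) \<le> L * real (wdist (c l) (c l'))"
    using c unfolding coarse_quasigeodesic_def by auto
  have "real (wdist (c l1) (c l2)) \<le> 6 * D" using dist by simp
  then have "L * real (wdist (c l1) (c l2)) \<le> 6 * L * D" using L mult_left_mono by fastforce
  moreover have "real (l2 - l1) \<le> L * real (wdist (c l1) (c l2))"
    "real (l1 - l2) \<le> L * real (wdist (c l1) (c l2))"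
    using qg[of l1 l2] qg[of l2 l1] word_dist_sym[of "c l1" "c l2"] c_closed l12 L by (cases "l1 \<le> l2"; simp)+
  ultimately have "real (l2 - l1 + 2) \<le> real ((2::nat) ^ k)" "real (l1 - l2 + 2) \<le> real ((2::nat) ^ k)"
    using k by simp_all
  then have k': "l2 - l1 + 2 \<le> 2 ^ k" "l1 - l2 + 2 \<le> 2 ^ k" by (simp_all only: of_nat_le_iff)
  show ?thesis
  proof (cases "l1 \<le> l2")
    case True
    show ?thesis
      by (rule detour_bound[of z a b l1 l2 c K "real D" k])
        (use z a b gp_ab True c_closed jump far l12 start stop k' in auto)
  next
    case False
    show ?thesis
      by (rule detour_bound[of z b a l2 l1 c K "real D" k])
        (use z a b gp_ab False c_closed jump far l12 start stop k' gromov_product_sym in auto)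
  qed
qed

lemma farthest_point_bound:
  fixes D :: nat
  assumes c: "coarse_quasigeodesic c m K L" "c 0 = x" "c m = y" and L: "L \<ge> 0"
    and \<gamma>: "geodesic \<gamma> x y" and x: "x \<in> carrier G" and y: "y \<in> carrier G"
    and near: "\<And>s. s \<le> wdist x y \<Longrightarrow> \<exists>l \<le> m. wdist (\<gamma> s) (c l) \<le> D"
    and far: "\<And>l. l \<le> m \<Longrightarrow> D \<le> wdist (\<gamma> s0) (c l)" and s0: "s0 \<le> wdist x y"
    and k: "6 * L * D + 2 \<le> 2 ^ k"
  shows "real D \<le> real K + real k * \<delta>"
proof -
  define n where "n = wdist x y"
  have c_closed: "\<And>l. l \<le> m \<Longrightarrow> c l \<in> carrier G"
    using c(1) unfolding coarse_quasigeodesic_def by auto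
  define s1 where "s1 = s0 - 2 * D"
  define s2 where "s2 = min (s0 + 2 * D) n"
  have s12: "s1 \<le> s0" "s0 \<le> s2" "s2 \<le> n" "s2 - s1 \<le> 4 * D" using s0 by (auto simp: s1_def s2_def n_def)
  obtain l1 where l1: "l1 \<le> m" "wdist (\<gamma> s1) (c l1) \<le> D"
    "real D \<le> real (wdist (\<gamma> s0) (\<gamma> s1)) - real (wdist (\<gamma> s1) (c l1))"
  proof (cases "2 * D \<le> s0")
    case True
    then have "wdist (\<gamma> s0) (\<gamma> s1) = 2 * D"
      using geodesic_dist'[OF \<gamma>, of s1 s0] s12 by (simp add: s1_def n_def)
    moreover obtain l where "l \<le> m" "wdist (\<gamma> s1) (c l) \<le> D" using near[of s1] s12 by (auto simp: n_def)
    ultimately show ?thesis using that by force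
  next
    case False
    then have "\<gamma> s1 = c 0" using \<gamma> c(2) by (simp add: s1_def geodesic_def)
    then show ?thesis using that[of 0] far[of 0] c_closed[of 0] by simp
  qed
  obtain l2 where l2: "l2 \<le> m" "wdist (\<gamma> s2) (c l2) \<le> D"
    "real D \<le> real (wdist (\<gamma> s0) (\<gamma> s2)) - real (wdist (\<gamma> s2) (c l2))"
  proof (cases "s0 + 2 * D \<le> n")
    case True
    then have "wdist (\<gamma> s0) (\<gamma> s2) = 2 * D"
      using geodesic_dist[OF \<gamma>, of s0 s2] s12 by (simp add: s2_def n_def)
    moreover obtain l where "l \<le> m" "wdist (\<gamma> s2) (c l) \<le> D" using near[of s2] s12 by (auto simp: n_def)
    ultimately show ?thesis using that by force
  next
    case False
    then have "\<gamma> s2 = c m" using \<gamma> c(3) by (simp add: s2_def n_def geodesic_def)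
    then show ?thesis using that[of m] far[of m] c_closed[of m] by simp
  qed
  have closed: "\<gamma> s0 \<in> carrier G" "\<gamma> s1 \<in> carrier G" "\<gamma> s2 \<in> carrier G" "c l1 \<in> carrier G" "c l2 \<in> carrier G"
    using geodesic_closed[OF \<gamma>] c_closed s12 l1 l2 by (auto simp: n_def)
  have "wdist (c l1) (c l2) \<le> wdist (c l1) (\<gamma> s1) + wdist (\<gamma> s1) (\<gamma> s2) + wdist (\<gamma> s2) (c l2)"
    using word_dist_triangle[of "c l1" "\<gamma> s1" "c l2"] word_dist_triangle[of "\<gamma> s1" "\<gamma> s2" "c l2"] closed
    by simp
  moreover have "wdist (\<gamma> s1) (\<gamma> s2) = s2 - s1" using geodesic_dist[OF \<gamma>, of s1 s2] s12 by (simp add: n_def)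
  moreover have "wdist (c l1) (\<gamma> s1) = wdist (\<gamma> s1) (c l1)" using word_dist_sym closed by blast
  ultimately have "wdist (c l1) (c l2) \<le> 6 * D" using l1 l2 s12 by linarith
  moreover have "gp (\<gamma> s0) (\<gamma> s1) (\<gamma> s2) = 0"
    using geodesic_gromov_product_zero[OF \<gamma>] s12 by (simp add: n_def)
  ultimately show ?thesis
    using quasigeodesic_detour_bound[OF c(1) L closed(1-3) _ l1(1) l2(1)] far l1(3) l2(3) k by simp
qed

lemma geodesic_near_quasigeodesic:
  assumes c: "coarse_quasigeodesic c m K L" "c 0 = x" "c m = y" and L: "L \<ge> 0"
    and \<gamma>: "geodesic \<gamma> x y" and x: "x \<in> carrier G" and y: "y \<in> carrier G" and s: "s \<le> wdist x y"
  shows "\<exists>l \<le> m. real (wdist (\<gamma> s) (c l)) \<le> morse_const K L \<delta>"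
proof -
  define f where "f s = Min ((\<lambda>l. wdist (\<gamma> s) (c l)) ` {..m})" for s
  define D where "D = Max (f ` {..wdist x y})"
  have near: "\<exists>l \<le> m. wdist (\<gamma> s) (c l) \<le> D" if "s \<le> wdist x y" for s
  proof -
    have "f s \<in> (\<lambda>l. wdist (\<gamma> s) (c l)) ` {..m}" unfolding f_def by (intro Min_in) auto
    moreover have "f s \<le> D" unfolding D_def using that by (intro Max_ge) auto
    ultimately show ?thesis by auto
  qed
  have "D \<in> f ` {..wdist x y}" unfolding D_def by (intro Max_in) auto
  then obtain s0 where s0: "s0 \<le> wdist x y" "f s0 = D" by auto
  have far: "D \<le> wdist (\<gamma> s0) (c l)" if "l \<le> m" for l
    using that s0(2) unfolding f_def by (metis Min_le atMost_iff finite_atMost finite_imageI image_eqI)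
  have "real D \<le> morse_const K L \<delta>"
    using farthest_point_bound[OF c L \<gamma> x y near far s0(1)] L delta_nonneg
    by (intro le_morse_const) auto
  then show ?thesis using near[OF s] by force
qed

end

section \<open>The pushout along \<open>\<int> \<subseteq> \<rat>\<close>\<close>

lemma rat_group_group: "group rat_group"
  unfolding rat_group_def by (rule groupI) (auto intro: exI[of _ "- _"])

lemma rat_group_simps [simp]:
  "carrier rat_group = UNIV" "x \<otimes>\<^bsub>rat_group\<^esub> y = x + y" "\<one>\<^bsub>rat_group\<^esub> = 0"
  by (auto simp: rat_group_def)

lemma rat_group_inv [simp]: "inv\<^bsub>rat_group\<^esub> x = - x"
  using group.inv_equality[OF rat_group_group, of "- x" x] by simp

locale central_embedding = E: group E for E :: "('e, 'm) monoid_scheme" +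
  fixes \<iota> :: "int \<Rightarrow> 'e"
  assumes iota_hom: "\<iota> \<in> hom integer_group E" and iota_inj: "inj \<iota>"
    and iota_central: "\<And>n e. e \<in> carrier E \<Longrightarrow> \<iota> n \<otimes>\<^bsub>E\<^esub> e = e \<otimes>\<^bsub>E\<^esub> \<iota> n"
begin

lemma iota_closed [simp]: "\<iota> n \<in> carrier E"
  using iota_hom by (auto simp: hom_def)

lemma iota_add: "\<iota> (m + n) = \<iota> m \<otimes>\<^bsub>E\<^esub> \<iota> n"
  using iota_hom by (auto simp: hom_def)

lemma iota_zero [simp]: "\<iota> 0 = \<one>\<^bsub>E\<^esub>"
  using iota_add[of 0 0] E.l_cancel[of "\<iota> 0" "\<iota> 0" "\<one>\<^bsub>E\<^esub>"] by simp

lemma iota_eq_one_iff [simp]: "\<iota> n = \<one>\<^bsub>E\<^esub> \<longleftrightarrow> n = 0"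
  using injD[OF iota_inj, of n 0] by auto

lemma iota_neg: "\<iota> (- n) = inv\<^bsub>E\<^esub> (\<iota> n)"
  using iota_add[of "- n" n] by (simp add: E.inv_equality)

lemma mult_iota_iota: "a \<in> carrier E \<Longrightarrow> a \<otimes>\<^bsub>E\<^esub> \<iota> m \<otimes>\<^bsub>E\<^esub> \<iota> n = a \<otimes>\<^bsub>E\<^esub> \<iota> (m + n)"
  by (simp add: iota_add E.m_assoc)

lemma mult_iota_mult_iota:
  assumes "a \<in> carrier E" "b \<in> carrier E"
  shows "(a \<otimes>\<^bsub>E\<^esub> \<iota> m) \<otimes>\<^bsub>E\<^esub> (b \<otimes>\<^bsub>E\<^esub> \<iota> n) = a \<otimes>\<^bsub>E\<^esub> b \<otimes>\<^bsub>E\<^esub> \<iota> (m + n)"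
proof -
  have "(a \<otimes>\<^bsub>E\<^esub> \<iota> m) \<otimes>\<^bsub>E\<^esub> (b \<otimes>\<^bsub>E\<^esub> \<iota> n) = a \<otimes>\<^bsub>E\<^esub> ((\<iota> m \<otimes>\<^bsub>E\<^esub> b) \<otimes>\<^bsub>E\<^esub> \<iota> n)"
    using assms by (simp add: E.m_assoc)
  also have "\<dots> = a \<otimes>\<^bsub>E\<^esub> ((b \<otimes>\<^bsub>E\<^esub> \<iota> m) \<otimes>\<^bsub>E\<^esub> \<iota> n)"
    using iota_central[OF assms(2)] by simp
  also have "\<dots> = a \<otimes>\<^bsub>E\<^esub> b \<otimes>\<^bsub>E\<^esub> (\<iota> m \<otimes>\<^bsub>E\<^esub> \<iota> n)"
    using assms by (simp add: E.m_assoc)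
  finally show ?thesis by (simp add: iota_add)
qed

lemma mult_iota_cancel: "a \<in> carrier E \<Longrightarrow> a \<otimes>\<^bsub>E\<^esub> \<iota> m = a \<otimes>\<^bsub>E\<^esub> \<iota> n \<Longrightarrow> m = n"
  using E.l_cancel[of a "\<iota> m" "\<iota> n"] injD[OF iota_inj] by simp

lemma mult_iota_eq_self: "a \<in> carrier E \<Longrightarrow> a = a \<otimes>\<^bsub>E\<^esub> \<iota> m \<Longrightarrow> m = 0"
  using mult_iota_cancel[of a 0 m] by simp

abbreviation ExQ where "ExQ \<equiv> E \<times>\<times> rat_group"

definition qcls :: "'e \<Rightarrow> rat \<Rightarrow> ('e \<times> rat) set" where
  "qcls a r = pushout_kernel E \<iota> #>\<^bsub>ExQ\<^esub> (a, r)"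

lemma group_ExQ: "group ExQ"
  by (rule DirProd_group[OF E.is_group rat_group_group])

lemma pushout_kernel_normal: "pushout_kernel E \<iota> \<lhd> ExQ"
proof -
  interpret ExQ: group ExQ by (rule group_ExQ)
  have "subgroup (pushout_kernel E \<iota>) ExQ"
  proof
    show "pushout_kernel E \<iota> \<subseteq> carrier ExQ" by (auto simp: pushout_kernel_def)
    show "\<one>\<^bsub>ExQ\<^esub> \<in> pushout_kernel E \<iota>" by (auto simp: pushout_kernel_def intro!: image_eqI[of _ _ 0])
  next
    fix x y assume "x \<in> pushout_kernel E \<iota>" "y \<in> pushout_kernel E \<iota>"
    then obtain m n where "x = (\<iota> m, - of_int m)" "y = (\<iota> n, - of_int n)"
      by (auto simp: pushout_kernel_def)
    then show "x \<otimes>\<^bsub>ExQ\<^esub> y \<in> pushout_kernel E \<iota>"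
      by (auto simp: pushout_kernel_def iota_add intro!: image_eqI[of _ _ "m + n"])
  next
    fix x assume "x \<in> pushout_kernel E \<iota>"
    then obtain m where x: "x = (\<iota> m, - of_int m)" by (auto simp: pushout_kernel_def)
    then have "inv\<^bsub>ExQ\<^esub> x = (\<iota> (- m), of_int m)"
      by (simp add: inv_DirProd E.is_group rat_group_group iota_neg)
    then show "inv\<^bsub>ExQ\<^esub> x \<in> pushout_kernel E \<iota>"
      by (auto simp: pushout_kernel_def intro!: image_eqI[of _ _ "- m"])
  qed
  then show ?thesis
  proof (rule ExQ.normalI, intro ballI)
    fix x assume "x \<in> carrier ExQ"
    then obtain a r where x: "x = (a, r)" "a \<in> carrier E" by auto
    have "pushout_kernel E \<iota> #>\<^bsub>ExQ\<^esub> x = {(\<iota> n \<otimes>\<^bsub>E\<^esub> a, r - of_int n) | n. True}"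
      by (auto simp: r_coset_def pushout_kernel_def x)
    also have "\<dots> = {(a \<otimes>\<^bsub>E\<^esub> \<iota> n, - of_int n + r) | n. True}"
      using iota_central[OF x(2)] by simp
    also have "\<dots> = x <#\<^bsub>ExQ\<^esub> pushout_kernel E \<iota>"
      by (auto simp: l_coset_def pushout_kernel_def x)
    finally show "pushout_kernel E \<iota> #>\<^bsub>ExQ\<^esub> x = x <#\<^bsub>ExQ\<^esub> pushout_kernel E \<iota>" .
  qed
qed

lemma group_EQ: "group (EQ E \<iota>)"
  unfolding EQ_def by (rule normal.factorgroup_is_group[OF pushout_kernel_normal])

lemma qcls_hom: "(\<lambda>(a, r). qcls a r) \<in> hom ExQ (EQ E \<iota>)"
  using normal.r_coset_hom_Mod[OF pushout_kernel_normal]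
  unfolding EQ_def qcls_def by (simp add: case_prod_beta')

lemma qcls_closed: "a \<in> carrier E \<Longrightarrow> qcls a r \<in> carrier (EQ E \<iota>)"
  using qcls_hom unfolding hom_def by (auto simp: Pi_iff)

lemma qcls_mult:
  "a \<in> carrier E \<Longrightarrow> b \<in> carrier E \<Longrightarrow> qcls a r \<otimes>\<^bsub>EQ E \<iota>\<^esub> qcls b s = qcls (a \<otimes>\<^bsub>E\<^esub> b) (r + s)"
  using qcls_hom unfolding hom_def by auto

lemma qcls_one: "qcls \<one>\<^bsub>E\<^esub> 0 = \<one>\<^bsub>EQ E \<iota>\<^esub>"
  using group_hom.hom_one[of ExQ "EQ E \<iota>" "\<lambda>(a, r). qcls a r"] group_ExQ group_EQ qcls_hom
  by (simp add: group_hom_def group_hom_axioms_def)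

lemma qcls_inv: "a \<in> carrier E \<Longrightarrow> inv\<^bsub>EQ E \<iota>\<^esub> qcls a r = qcls (inv\<^bsub>E\<^esub> a) (- r)"
  using group.inv_equality[OF group_EQ, of "qcls (inv\<^bsub>E\<^esub> a) (- r)" "qcls a r"]
    qcls_mult[of "inv\<^bsub>E\<^esub> a" a] qcls_closed qcls_one by simp

lemma qcls_iota: "a \<in> carrier E \<Longrightarrow> qcls (\<iota> n \<otimes>\<^bsub>E\<^esub> a) r = qcls a (r + of_int n)"
proof -
  assume a: "a \<in> carrier E"
  have "(\<iota> n \<otimes>\<^bsub>E\<^esub> a, r) \<in> pushout_kernel E \<iota> #>\<^bsub>ExQ\<^esub> (a, r + of_int n)"
    unfolding r_coset_def pushout_kernel_def by (auto intro!: bexI[of _ "(\<iota> n, - of_int n)"])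
  then show ?thesis unfolding qcls_def
    using group.repr_independence[OF group_ExQ _ _ normal_imp_subgroup[OF pushout_kernel_normal]] a
    by auto
qed

lemma iotaQ_eq_qcls: "iotaQ E \<iota> r = qcls \<one>\<^bsub>E\<^esub> r"
  unfolding iotaQ_def qcls_def ..

lemma embQ_eq_qcls: "embQ E \<iota> a = qcls a 0"
  unfolding embQ_def qcls_def ..

lemma iotaQ_inj: "iotaQ E \<iota> r = iotaQ E \<iota> s \<Longrightarrow> r = s"
proof -
  assume "iotaQ E \<iota> r = iotaQ E \<iota> s"
  then have "(\<one>\<^bsub>E\<^esub>, s) \<in> pushout_kernel E \<iota> #>\<^bsub>ExQ\<^esub> (\<one>\<^bsub>E\<^esub>, r)"
    using group.repr_independenceD[OF group_ExQ normal_imp_subgroup[OF pushout_kernel_normal],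
        of "(\<one>\<^bsub>E\<^esub>, s)"]
    by (auto simp: iotaQ_eq_qcls qcls_def)
  then obtain n where "\<one>\<^bsub>E\<^esub> = \<iota> n \<otimes>\<^bsub>E\<^esub> \<one>\<^bsub>E\<^esub>" "s = - of_int n + r"
    unfolding r_coset_def pushout_kernel_def by auto
  then show "r = s" using injD[OF iota_inj, of n 0] by simp
qed

lemma fibre_avg_qcls:
  assumes a: "a \<in> carrier E" and b: "b \<in> carrier E" and ab: "a \<otimes>\<^bsub>E\<^esub> b = \<iota> (- n)"
  shows "fibre_avg E \<iota> (embQ E \<iota> a) (inv\<^bsub>EQ E \<iota>\<^esub> (embQ E \<iota> b)) = qcls a (of_int n / 2)"
proof -
  have "inv\<^bsub>E\<^esub> b = \<iota> n \<otimes>\<^bsub>E\<^esub> a"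
  proof -
    have "b = inv\<^bsub>E\<^esub> a \<otimes>\<^bsub>E\<^esub> \<iota> (- n)" using ab a b by (metis E.inv_solve_left iota_closed E.m_closed)
    then show ?thesis using a b by (simp add: E.inv_mult_group iota_neg iota_central)
  qed
  then have b': "inv\<^bsub>EQ E \<iota>\<^esub> (embQ E \<iota> b) = qcls a (of_int n)"
    using a b by (simp add: embQ_eq_qcls qcls_inv qcls_iota)
  have "embQ E \<iota> a \<otimes>\<^bsub>EQ E \<iota>\<^esub> inv\<^bsub>EQ E \<iota>\<^esub> (qcls a (of_int n)) = iotaQ E \<iota> (- of_int n)"
    using a by (simp add: embQ_eq_qcls qcls_inv qcls_mult iotaQ_eq_qcls)
  then have "(THE r. iotaQ E \<iota> r = embQ E \<iota> a \<otimes>\<^bsub>EQ E \<iota>\<^esub> inv\<^bsub>EQ E \<iota>\<^esub> (qcls a (of_int n))) = - of_int n"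
    by (auto dest: iotaQ_inj)
  then show ?thesis unfolding fibre_avg_def b' using a by (simp add: iotaQ_eq_qcls qcls_mult)
qed

lemma qcls_coboundary:
  assumes "a \<in> carrier E" "b \<in> carrier E" "c \<in> carrier E"
    and "inv\<^bsub>E\<^esub> a \<otimes>\<^bsub>E\<^esub> b \<otimes>\<^bsub>E\<^esub> c = \<iota> m"
  shows "inv\<^bsub>EQ E \<iota>\<^esub> (qcls a r) \<otimes>\<^bsub>EQ E \<iota>\<^esub> qcls b s \<otimes>\<^bsub>EQ E \<iota>\<^esub> qcls c u = iotaQ E \<iota> (of_int m - r + s + u)"
  using assms qcls_iota[of "\<one>\<^bsub>E\<^esub>" m "- r + s + u"]
  by (simp add: qcls_inv qcls_mult iotaQ_eq_qcls algebra_simps)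

end

section \<open>Non-negative normalised cocycles\<close>

locale nonneg_cocycle = group +
  fixes F :: "'a \<Rightarrow> 'a \<Rightarrow> int"
  assumes cocycle: "\<And>x y z. x \<in> carrier G \<Longrightarrow> y \<in> carrier G \<Longrightarrow> z \<in> carrier G \<Longrightarrow>
      F x y + F (x \<otimes> y) z = F y z + F x (y \<otimes> z)"
    and nonneg: "\<And>x y. x \<in> carrier G \<Longrightarrow> y \<in> carrier G \<Longrightarrow> F x y \<ge> 0"
    and one_right: "\<And>x. x \<in> carrier G \<Longrightarrow> F x \<one> = 0"
    and one_left: "\<And>x. x \<in> carrier G \<Longrightarrow> F \<one> x = 0"
begin

definition Finv :: "'a \<Rightarrow> int" where
  "Finv x = F x (inv x)"

definition split_defect :: "'a \<Rightarrow> 'a \<Rightarrow> int" where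
  "split_defect u a = F u (inv u \<otimes> a)"

lemma Finv_one: "Finv \<one> = 0"
  by (simp add: Finv_def one_left)

lemma Finv_inv: "s \<in> carrier G \<Longrightarrow> Finv (inv s) = Finv s"
  using cocycle[of s "inv s" s] one_right[of s] one_left[of s] unfolding Finv_def by simp

lemma Finv_mult:
  assumes "x \<in> carrier G" "s \<in> carrier G"
  shows "Finv (x \<otimes> s) = Finv x + Finv s - F x s - F (inv s) (inv x)"
proof -
  have "F x s + F (x \<otimes> s) (inv s \<otimes> inv x) = F s (inv s \<otimes> inv x) + F x (inv x)"
    using cocycle[of x s "inv s \<otimes> inv x"] assms by (simp add: m_assoc[symmetric])
  moreover have "F s (inv s) = F (inv s) (inv x) + F s (inv s \<otimes> inv x)"
    using cocycle[of s "inv s" "inv x"] assms one_left by simp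
  ultimately show ?thesis using assms unfolding Finv_def by (simp add: inv_mult_group)
qed

lemma Finv_mult_le: "x \<in> carrier G \<Longrightarrow> s \<in> carrier G \<Longrightarrow> Finv (x \<otimes> s) \<le> Finv x + Finv s"
  using Finv_mult[of x s] nonneg[of x s] nonneg[of "inv s" "inv x"] by simp

lemma F_le_Finv: "z \<in> carrier G \<Longrightarrow> k \<in> carrier G \<Longrightarrow> F z k \<le> Finv k"
  using cocycle[of z k "inv k"] nonneg[of "z \<otimes> k" "inv k"] one_right[of z] unfolding Finv_def by simp

lemma split_defect_le_Finv:
  assumes "u \<in> carrier G" "k \<in> carrier G" "a \<in> carrier G" and "split_defect (u \<otimes> k) a = 0"
  shows "split_defect u a \<le> Finv k"
proof -
  let ?v = "inv k \<otimes> (inv u \<otimes> a)"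
  have "F u k + F (u \<otimes> k) ?v = F k ?v + F u (k \<otimes> ?v)" using cocycle[of u k ?v] assms by simp
  moreover have "inv (u \<otimes> k) \<otimes> a = ?v" using assms by (simp add: inv_mult_group m_assoc)
  moreover have "k \<otimes> ?v = inv u \<otimes> a" using assms by (simp add: m_assoc[symmetric])
  ultimately show ?thesis
    using assms F_le_Finv[of u k] nonneg[of k ?v] unfolding split_defect_def by simp
qed

text \<open>The defect of \<open>Finv\<close> on \<open>g, h\<close> is a signed sum of six split defects at an arbitrary point \<open>x\<close>,
  one for each side of the triangle \<open>1, g, g h\<close> read in both directions.\<close>

lemma Finv_defect_eq:
  assumes x: "x \<in> carrier G" and g: "g \<in> carrier G" and h: "h \<in> carrier G"
  shows "Finv g + Finv h - Finv (g \<otimes> h) - 2 * F g h =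
    (split_defect x g - split_defect (inv g \<otimes> x) (inv g)) +
    (split_defect (inv g \<otimes> x) h - split_defect (inv (g \<otimes> h) \<otimes> x) (inv h)) -
    (split_defect x (g \<otimes> h) - split_defect (inv (g \<otimes> h) \<otimes> x) (inv (g \<otimes> h)))"
proof -
  define s where "s = inv x \<otimes> g"
  define t where "t = inv x \<otimes> (g \<otimes> h)"
  have st: "s \<in> carrier G" "t \<in> carrier G" using x g h by (simp_all add: s_def t_def)
  have prod: "x \<otimes> s = g" "inv s \<otimes> t = h" "x \<otimes> t = g \<otimes> h"
    using x g h by (simp_all add: s_def t_def inv_mult_group m_assoc)
  have splits: "split_defect x g = F x s" "split_defect (inv g \<otimes> x) (inv g) = F (inv s) (inv x)"
    "split_defect (inv g \<otimes> x) h = F (inv s) t" "split_defect (inv (g \<otimes> h) \<otimes> x) (inv h) = F (inv t) s"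
    "split_defect x (g \<otimes> h) = F x t" "split_defect (inv (g \<otimes> h) \<otimes> x) (inv (g \<otimes> h)) = F (inv t) (inv x)"
    using x g h by (simp_all add: split_defect_def s_def t_def inv_mult_group m_assoc)
  have "F x s + F (x \<otimes> s) (inv s \<otimes> t) = F s (inv s \<otimes> t) + F x t"
    using cocycle[of x s "inv s \<otimes> t"] x st by (simp add: m_assoc[symmetric])
  moreover have "Finv s = F (inv s) t + F s (inv s \<otimes> t)"
    using cocycle[of s "inv s" t] st one_left unfolding Finv_def by simp
  moreover have "Finv (inv s \<otimes> t) = Finv (inv s) + Finv t - F (inv s) t - F (inv t) s"
    using Finv_mult[of "inv s" t] st by simp
  moreover have "Finv (x \<otimes> s) = Finv x + Finv s - F x s - F (inv s) (inv x)"
    using Finv_mult x st by simp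
  moreover have "Finv (x \<otimes> t) = Finv x + Finv t - F x t - F (inv t) (inv x)"
    using Finv_mult x st by simp
  ultimately have "Finv (x \<otimes> s) + Finv (inv s \<otimes> t) - Finv (x \<otimes> t) - 2 * F (x \<otimes> s) (inv s \<otimes> t) =
    (F x s - F (inv s) (inv x)) + (F (inv s) t - F (inv t) s) - (F x t - F (inv t) (inv x))"
    using Finv_inv[of s] st by linarith
  then show ?thesis unfolding splits prod .
qed

end

section \<open>The cocycle of the maximal section\<close>

locale max_section =
  fixes G :: "('g, 'n) monoid_scheme" and E :: "('e, 'm) monoid_scheme"
    and \<iota> :: "int \<Rightarrow> 'e" and \<pi> :: "'e \<Rightarrow> 'g"
    and Xa :: "'x set" and ev :: "'x \<Rightarrow> 'e" and C :: int and \<rho> :: "'g \<Rightarrow> 'e"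
  assumes ext: "central_extension E G \<iota> \<pi>"
    and ev: "ev \<in> Xa \<rightarrow> carrier E"
    and rho_max: "\<forall>g\<in>carrier G. is_fibre_max E \<iota> (\<rho> g) (cost_set E \<iota> \<pi> Xa ev C g)"
begin

sublocale central_embedding E \<iota>
  using ext by (auto simp: central_extension_def central_embedding_def central_embedding_axioms_def)

sublocale G: group G
  using ext by (simp add: central_extension_def)

sublocale pi: group_hom E G \<pi>
  using ext by (auto simp: central_extension_def group_hom_def group_hom_axioms_def)

lemma pi_surj: "\<pi> ` carrier E = carrier G"
  using ext by (simp add: central_extension_def)

lemma pi_iota [simp]: "\<pi> (\<iota> n) = \<one>\<^bsub>G\<^esub>"
  using ext unfolding central_extension_def kernel_def by blast

lemma kernel_pi_iota: "z \<in> carrier E \<Longrightarrow> \<pi> z = \<one>\<^bsub>G\<^esub> \<Longrightarrow> \<exists>n. z = \<iota> n"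
  using ext unfolding central_extension_def kernel_def by blast

lemma ev_closed: "x \<in> Xa \<Longrightarrow> ev x \<in> carrier E"
  using ev by auto

lemma ev_word_closed: "w \<in> lists Xa \<Longrightarrow> ev ` set w \<subseteq> carrier E"
  using ev by auto

lemma eval_word_lists_closed: "w \<in> lists Xa \<Longrightarrow> eval_word E ev w \<in> carrier E"
  by (simp add: E.eval_word_closed ev_word_closed)

definition word_cost :: "'x list \<Rightarrow> 'e" where
  "word_cost w = eval_word E ev w \<otimes>\<^bsub>E\<^esub> \<iota> (- C * int (length w))"

lemma word_cost_closed: "w \<in> lists Xa \<Longrightarrow> word_cost w \<in> carrier E"
  by (simp add: word_cost_def eval_word_lists_closed)

lemma pi_word_cost: "w \<in> lists Xa \<Longrightarrow> \<pi> (word_cost w) = \<pi> (eval_word E ev w)"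
  by (simp add: word_cost_def eval_word_lists_closed)

lemma word_cost_append:
  assumes "u \<in> lists Xa" "v \<in> lists Xa"
  shows "word_cost (u @ v) = word_cost u \<otimes>\<^bsub>E\<^esub> word_cost v"
proof -
  have "eval_word E ev (u @ v) = eval_word E ev u \<otimes>\<^bsub>E\<^esub> eval_word E ev v"
    using assms by (simp add: E.eval_word_append ev_word_closed)
  moreover have "- C * int (length (u @ v)) = - C * int (length u) + - C * int (length v)"
    by (simp add: algebra_simps)
  ultimately show ?thesis
    unfolding word_cost_def using assms mult_iota_mult_iota eval_word_lists_closed by simp
qed

lemma rho_attained:
  assumes "g \<in> carrier G"
  shows "\<exists>w. w \<in> lists Xa \<and> \<pi> (eval_word E ev w) = g \<and> \<rho> g = word_cost w"
proof -
  have "\<rho> g \<in> cost_set E \<iota> \<pi> Xa ev C g" using rho_max assms by (simp add: is_fibre_max_def)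
  then show ?thesis by (auto simp: cost_set_def word_cost_def)
qed

lemma rho_closed: "g \<in> carrier G \<Longrightarrow> \<rho> g \<in> carrier E"
  using rho_attained word_cost_closed by metis

lemma pi_rho: "g \<in> carrier G \<Longrightarrow> \<pi> (\<rho> g) = g"
  using rho_attained pi_word_cost by metis

lemma rho_ge_word_cost:
  assumes g: "g \<in> carrier G" and w: "w \<in> lists Xa" "\<pi> (eval_word E ev w) = g"
  shows "\<exists>n\<ge>0. \<rho> g = word_cost w \<otimes>\<^bsub>E\<^esub> \<iota> n"
proof -
  have "word_cost w \<in> cost_set E \<iota> \<pi> Xa ev C g" using w by (auto simp: cost_set_def word_cost_def)
  then obtain n where n: "n \<ge> 0" "\<rho> g \<otimes>\<^bsub>E\<^esub> inv\<^bsub>E\<^esub> (word_cost w) = \<iota> n"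
    using rho_max g by (auto simp: is_fibre_max_def fibre_le_def)
  then have "\<rho> g = \<iota> n \<otimes>\<^bsub>E\<^esub> word_cost w"
    using E.inv_solve_right'[of "\<iota> n" "\<rho> g" "word_cost w"] rho_closed[OF g] word_cost_closed[OF w(1)] by simp
  then show ?thesis using n iota_central word_cost_closed[OF w(1)] by auto
qed

definition rho_cocycle :: "'g \<Rightarrow> 'g \<Rightarrow> int" where
  "rho_cocycle g h = (THE n. \<rho> (g \<otimes>\<^bsub>G\<^esub> h) = \<rho> g \<otimes>\<^bsub>E\<^esub> \<rho> h \<otimes>\<^bsub>E\<^esub> \<iota> n)"

lemma rho_mult:
  assumes g: "g \<in> carrier G" and h: "h \<in> carrier G"
  shows "\<rho> (g \<otimes>\<^bsub>G\<^esub> h) = \<rho> g \<otimes>\<^bsub>E\<^esub> \<rho> h \<otimes>\<^bsub>E\<^esub> \<iota> (rho_cocycle g h)"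
proof -
  have closed: "\<rho> g \<otimes>\<^bsub>E\<^esub> \<rho> h \<in> carrier E" "\<rho> (g \<otimes>\<^bsub>G\<^esub> h) \<in> carrier E"
    using rho_closed g h by auto
  define z where "z = inv\<^bsub>E\<^esub> (\<rho> g \<otimes>\<^bsub>E\<^esub> \<rho> h) \<otimes>\<^bsub>E\<^esub> \<rho> (g \<otimes>\<^bsub>G\<^esub> h)"
  have "\<pi> z = \<one>\<^bsub>G\<^esub>"
    using closed g h by (simp add: z_def pi_rho rho_closed)
  moreover have "z \<in> carrier E" using closed by (simp add: z_def)
  ultimately obtain n where "z = \<iota> n" using kernel_pi_iota by blast
  then have eq: "\<rho> (g \<otimes>\<^bsub>G\<^esub> h) = \<rho> g \<otimes>\<^bsub>E\<^esub> \<rho> h \<otimes>\<^bsub>E\<^esub> \<iota> n"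
    using closed E.inv_solve_left'[of "\<iota> n" "\<rho> g \<otimes>\<^bsub>E\<^esub> \<rho> h"] unfolding z_def by simp
  moreover have "m = n" if "\<rho> (g \<otimes>\<^bsub>G\<^esub> h) = \<rho> g \<otimes>\<^bsub>E\<^esub> \<rho> h \<otimes>\<^bsub>E\<^esub> \<iota> m" for m
    using mult_iota_cancel[OF closed(1)] that eq by simp
  ultimately have "rho_cocycle g h = n" unfolding rho_cocycle_def by (intro the_equality) auto
  with eq show ?thesis by simp
qed

text \<open>Concatenating words realising \<open>\<rho> g\<close> and \<open>\<rho> h\<close> gives a word for \<open>g h\<close>; its cost
  \<open>\<rho> g \<rho> h\<close> is at most \<open>\<rho> (g h)\<close> by maximality.\<close>

lemma rho_cocycle_nonneg:
  assumes g: "g \<in> carrier G" and h: "h \<in> carrier G"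
  shows "rho_cocycle g h \<ge> 0"
proof -
  obtain u v where u: "u \<in> lists Xa" "\<pi> (eval_word E ev u) = g" "\<rho> g = word_cost u"
    and v: "v \<in> lists Xa" "\<pi> (eval_word E ev v) = h" "\<rho> h = word_cost v"
    using rho_attained g h by meson
  have "\<pi> (eval_word E ev (u @ v)) = g \<otimes>\<^bsub>G\<^esub> h"
    using u v by (simp add: E.eval_word_append ev_word_closed eval_word_lists_closed)
  then obtain n where n: "n \<ge> 0" "\<rho> (g \<otimes>\<^bsub>G\<^esub> h) = \<rho> g \<otimes>\<^bsub>E\<^esub> \<rho> h \<otimes>\<^bsub>E\<^esub> \<iota> n"
    using rho_ge_word_cost[of "g \<otimes>\<^bsub>G\<^esub> h" "u @ v"] u v g h by (auto simp: word_cost_append)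
  then have "rho_cocycle g h = n"
    using rho_mult[OF g h] mult_iota_cancel rho_closed g h by (metis E.m_closed)
  with n show ?thesis by simp
qed

lemma rho_one: "\<rho> \<one>\<^bsub>G\<^esub> = \<one>\<^bsub>E\<^esub>"
proof -
  have one: "\<one>\<^bsub>G\<^esub> \<in> carrier G" by simp
  have "\<pi> (eval_word E ev []) = \<one>\<^bsub>G\<^esub>" by simp
  then obtain n where n: "n \<ge> 0" "\<rho> \<one>\<^bsub>G\<^esub> = \<iota> n"
    using rho_ge_word_cost[OF one, of "[]"] by (auto simp: word_cost_def)
  let ?d = "rho_cocycle \<one>\<^bsub>G\<^esub> \<one>\<^bsub>G\<^esub>"
  have "\<iota> n \<otimes>\<^bsub>E\<^esub> \<iota> 0 = \<iota> n" by simp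
  also have "\<dots> = \<iota> n \<otimes>\<^bsub>E\<^esub> \<iota> n \<otimes>\<^bsub>E\<^esub> \<iota> ?d" using rho_mult[OF one one] n by simp
  also have "\<dots> = \<iota> n \<otimes>\<^bsub>E\<^esub> \<iota> (n + ?d)" by (rule mult_iota_iota) simp
  finally have "n + ?d = 0" using mult_iota_cancel[of "\<iota> n" 0] by simp
  then have "n = 0" using n rho_cocycle_nonneg[OF one one] by simp
  then show ?thesis using n by simp
qed

lemma rho_cocycle_one_right: "x \<in> carrier G \<Longrightarrow> rho_cocycle x \<one>\<^bsub>G\<^esub> = 0"
  using rho_mult[of x "\<one>\<^bsub>G\<^esub>"] rho_closed by (simp add: rho_one)

lemma rho_cocycle_one_left: "x \<in> carrier G \<Longrightarrow> rho_cocycle \<one>\<^bsub>G\<^esub> x = 0"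
  using rho_mult[of "\<one>\<^bsub>G\<^esub>" x] rho_closed by (simp add: rho_one)

lemma rho_cocycle_cocycle:
  assumes x: "x \<in> carrier G" and y: "y \<in> carrier G" and z: "z \<in> carrier G"
  shows "rho_cocycle x y + rho_cocycle (x \<otimes>\<^bsub>G\<^esub> y) z = rho_cocycle y z + rho_cocycle x (y \<otimes>\<^bsub>G\<^esub> z)"
proof -
  have closed: "\<rho> x \<in> carrier E" "\<rho> y \<in> carrier E" "\<rho> z \<in> carrier E" using rho_closed x y z by auto
  have "\<rho> ((x \<otimes>\<^bsub>G\<^esub> y) \<otimes>\<^bsub>G\<^esub> z) =
      (\<rho> x \<otimes>\<^bsub>E\<^esub> \<rho> y \<otimes>\<^bsub>E\<^esub> \<iota> (rho_cocycle x y)) \<otimes>\<^bsub>E\<^esub> (\<rho> z \<otimes>\<^bsub>E\<^esub> \<iota> (rho_cocycle (x \<otimes>\<^bsub>G\<^esub> y) z))"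
    using rho_mult x y z closed by (simp add: E.m_assoc)
  also have "\<dots> = \<rho> x \<otimes>\<^bsub>E\<^esub> \<rho> y \<otimes>\<^bsub>E\<^esub> \<rho> z \<otimes>\<^bsub>E\<^esub> \<iota> (rho_cocycle x y + rho_cocycle (x \<otimes>\<^bsub>G\<^esub> y) z)"
    using closed by (simp add: mult_iota_mult_iota)
  finally have left: "\<rho> ((x \<otimes>\<^bsub>G\<^esub> y) \<otimes>\<^bsub>G\<^esub> z) =
      \<rho> x \<otimes>\<^bsub>E\<^esub> \<rho> y \<otimes>\<^bsub>E\<^esub> \<rho> z \<otimes>\<^bsub>E\<^esub> \<iota> (rho_cocycle x y + rho_cocycle (x \<otimes>\<^bsub>G\<^esub> y) z)" .
  have "\<rho> (x \<otimes>\<^bsub>G\<^esub> (y \<otimes>\<^bsub>G\<^esub> z)) =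
      \<rho> x \<otimes>\<^bsub>E\<^esub> (\<rho> y \<otimes>\<^bsub>E\<^esub> \<rho> z \<otimes>\<^bsub>E\<^esub> \<iota> (rho_cocycle y z)) \<otimes>\<^bsub>E\<^esub> \<iota> (rho_cocycle x (y \<otimes>\<^bsub>G\<^esub> z))"
    using rho_mult x y z by simp
  also have "\<dots> = \<rho> x \<otimes>\<^bsub>E\<^esub> \<rho> y \<otimes>\<^bsub>E\<^esub> \<rho> z \<otimes>\<^bsub>E\<^esub> \<iota> (rho_cocycle y z + rho_cocycle x (y \<otimes>\<^bsub>G\<^esub> z))"
    using closed by (simp add: E.m_assoc iota_add)
  finally have right: "\<rho> (x \<otimes>\<^bsub>G\<^esub> (y \<otimes>\<^bsub>G\<^esub> z)) =
      \<rho> x \<otimes>\<^bsub>E\<^esub> \<rho> y \<otimes>\<^bsub>E\<^esub> \<rho> z \<otimes>\<^bsub>E\<^esub> \<iota> (rho_cocycle y z + rho_cocycle x (y \<otimes>\<^bsub>G\<^esub> z))" .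
  have "(x \<otimes>\<^bsub>G\<^esub> y) \<otimes>\<^bsub>G\<^esub> z = x \<otimes>\<^bsub>G\<^esub> (y \<otimes>\<^bsub>G\<^esub> z)" using x y z by (simp add: G.m_assoc)
  then show ?thesis using left right mult_iota_cancel closed by (metis E.m_closed)
qed

sublocale rho: nonneg_cocycle G rho_cocycle
  by unfold_locales (simp_all add: rho_cocycle_cocycle rho_cocycle_nonneg rho_cocycle_one_right rho_cocycle_one_left)

text \<open>Splitting a maximal word for \<open>a\<close> at any position splits \<open>\<rho> a\<close> without defect: both halves are
  dominated by \<open>\<rho>\<close> of their images, and the defects add up to zero.\<close>

lemma split_defect_prefix_zero:
  assumes w: "w \<in> lists Xa" and a: "a \<in> carrier G" and pw: "\<pi> (eval_word E ev w) = a"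
    and rho_a: "\<rho> a = word_cost w"
  shows "rho.split_defect (\<pi> (eval_word E ev (take i w))) a = 0"
proof -
  define u where "u = take i w"
  define v where "v = drop i w"
  have uv: "u \<in> lists Xa" "v \<in> lists Xa" "w = u @ v"
    using w by (auto simp: u_def v_def dest: in_set_takeD in_set_dropD)
  define p where "p = \<pi> (eval_word E ev u)"
  have p: "p \<in> carrier G" using uv eval_word_lists_closed by (simp add: p_def)
  have "a = p \<otimes>\<^bsub>G\<^esub> \<pi> (eval_word E ev v)"
    using pw uv by (simp add: p_def E.eval_word_append ev_word_closed eval_word_lists_closed)
  then have q: "\<pi> (eval_word E ev v) = inv\<^bsub>G\<^esub> p \<otimes>\<^bsub>G\<^esub> a"
    using p uv eval_word_lists_closed by (simp add: G.inv_mult_cancel)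
  have q_closed: "inv\<^bsub>G\<^esub> p \<otimes>\<^bsub>G\<^esub> a \<in> carrier G" using p a by simp
  obtain m1 where m1: "m1 \<ge> 0" "\<rho> p = word_cost u \<otimes>\<^bsub>E\<^esub> \<iota> m1"
    using rho_ge_word_cost[OF p uv(1)] p_def by blast
  obtain m2 where m2: "m2 \<ge> 0" "\<rho> (inv\<^bsub>G\<^esub> p \<otimes>\<^bsub>G\<^esub> a) = word_cost v \<otimes>\<^bsub>E\<^esub> \<iota> m2"
    using rho_ge_word_cost[OF q_closed uv(2) q] by blast
  let ?d = "rho_cocycle p (inv\<^bsub>G\<^esub> p \<otimes>\<^bsub>G\<^esub> a)"
  have "\<rho> a = \<rho> (p \<otimes>\<^bsub>G\<^esub> (inv\<^bsub>G\<^esub> p \<otimes>\<^bsub>G\<^esub> a))" using p a by simp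
  also have "\<dots> = (word_cost u \<otimes>\<^bsub>E\<^esub> \<iota> m1) \<otimes>\<^bsub>E\<^esub> (word_cost v \<otimes>\<^bsub>E\<^esub> \<iota> m2) \<otimes>\<^bsub>E\<^esub> \<iota> ?d"
    using rho_mult[OF p q_closed] m1 m2 by simp
  also have "\<dots> = \<rho> a \<otimes>\<^bsub>E\<^esub> \<iota> (m1 + m2 + ?d)"
    using uv rho_a word_cost_closed by (simp add: mult_iota_mult_iota mult_iota_iota word_cost_append)
  finally have "m1 + m2 + ?d = 0" using mult_iota_eq_self rho_closed a by blast
  then show ?thesis
    using m1 m2 rho_cocycle_nonneg[OF p q_closed] by (simp add: rho.split_defect_def p_def u_def)
qed

lemma rho_mult_rho_inv:
  assumes g: "g \<in> carrier G"
  shows "\<rho> g \<otimes>\<^bsub>E\<^esub> \<rho> (inv\<^bsub>G\<^esub> g) = \<iota> (- rho.Finv g)"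
proof -
  let ?A = "\<rho> g \<otimes>\<^bsub>E\<^esub> \<rho> (inv\<^bsub>G\<^esub> g)"
  have A: "?A \<in> carrier E" using rho_closed g by simp
  have "\<one>\<^bsub>E\<^esub> = ?A \<otimes>\<^bsub>E\<^esub> \<iota> (rho.Finv g)"
    using rho_mult[of g "inv\<^bsub>G\<^esub> g"] g unfolding rho.Finv_def by (simp only: G.r_inv G.inv_closed rho_one)
  then have "\<iota> (- rho.Finv g) = ?A \<otimes>\<^bsub>E\<^esub> \<iota> (rho.Finv g) \<otimes>\<^bsub>E\<^esub> \<iota> (- rho.Finv g)"
    by (metis E.l_one iota_closed)
  also have "\<dots> = ?A" using A by (simp add: mult_iota_iota)
  finally show ?thesis ..
qed

lemma qmap_eq_qcls: "g \<in> carrier G \<Longrightarrow> qmap G E \<iota> \<rho> g = qcls (\<rho> g) (of_int (rho.Finv g) / 2)"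
  unfolding qmap_def using fibre_avg_qcls[OF rho_closed rho_closed rho_mult_rho_inv] by simp

lemma qmap_coboundary:
  assumes g: "g \<in> carrier G" and h: "h \<in> carrier G"
  shows "inv\<^bsub>EQ E \<iota>\<^esub> (qmap G E \<iota> \<rho> (g \<otimes>\<^bsub>G\<^esub> h)) \<otimes>\<^bsub>EQ E \<iota>\<^esub> qmap G E \<iota> \<rho> g \<otimes>\<^bsub>EQ E \<iota>\<^esub> qmap G E \<iota> \<rho> h =
    iotaQ E \<iota> (of_int (rho.Finv g + rho.Finv h - rho.Finv (g \<otimes>\<^bsub>G\<^esub> h) - 2 * rho_cocycle g h) / 2)"
proof -
  have gh: "g \<otimes>\<^bsub>G\<^esub> h \<in> carrier G" using g h by simp
  have "inv\<^bsub>E\<^esub> (\<rho> (g \<otimes>\<^bsub>G\<^esub> h)) \<otimes>\<^bsub>E\<^esub> \<rho> g \<otimes>\<^bsub>E\<^esub> \<rho> h = \<iota> (- rho_cocycle g h)"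
    using rho_mult[OF g h] rho_closed g h
    by (simp add: E.inv_mult_group E.m_assoc iota_neg)
  then have "inv\<^bsub>EQ E \<iota>\<^esub> (qmap G E \<iota> \<rho> (g \<otimes>\<^bsub>G\<^esub> h)) \<otimes>\<^bsub>EQ E \<iota>\<^esub> qmap G E \<iota> \<rho> g \<otimes>\<^bsub>EQ E \<iota>\<^esub> qmap G E \<iota> \<rho> h =
    iotaQ E \<iota> (of_int (- rho_cocycle g h) - of_int (rho.Finv (g \<otimes>\<^bsub>G\<^esub> h)) / 2 +
      of_int (rho.Finv g) / 2 + of_int (rho.Finv h) / 2)"
    unfolding qmap_eq_qcls[OF g] qmap_eq_qcls[OF h] qmap_eq_qcls[OF gh]
    by (rule qcls_coboundary[OF rho_closed[OF gh] rho_closed[OF g] rho_closed[OF h]])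
  also have "of_int (- rho_cocycle g h) - of_int (rho.Finv (g \<otimes>\<^bsub>G\<^esub> h)) / 2 +
      of_int (rho.Finv g) / 2 + of_int (rho.Finv h) / 2 =
    (of_int (rho.Finv g + rho.Finv h - rho.Finv (g \<otimes>\<^bsub>G\<^esub> h) - 2 * rho_cocycle g h) / 2 :: rat)"
    by (simp add: field_simps)
  finally show ?thesis .
qed

end

section \<open>Boundedness\<close>

locale hyperbolic_max_section =
  max_section G E \<iota> \<pi> Xa ev C \<rho> + hyperbolic_word_metric G S \<delta>
  for G :: "('g, 'n) monoid_scheme" and E :: "('e, 'm) monoid_scheme"
    and \<iota> :: "int \<Rightarrow> 'e" and \<pi> :: "'e \<Rightarrow> 'g"
    and Xa :: "'x set" and ev :: "'x \<Rightarrow> 'e" and C :: int and \<rho> :: "'g \<Rightarrow> 'e"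
    and S :: "'g set" and \<delta> :: real +
  fixes lam :: real
  assumes gens_finite: "finite S" and letters_finite: "finite Xa" and lam_pos: "lam > 0"
    and ev_generate: "generate E (ev ` Xa) = carrier E"
    and rho_words_quasigeodesic: "\<forall>g\<in>carrier G. \<forall>w\<in>lists Xa.
          \<pi> (eval_word E ev w) = g \<and> eval_word E ev w \<otimes>\<^bsub>E\<^esub> \<iota> (- C * int (length w)) = \<rho> g \<longrightarrow>
          quasigeodesic_word G (\<pi> ` ev ` Xa) (\<pi> \<circ> ev) lam 0 w"
begin

lemma image_gens_word_metric: "word_metric G (\<pi> ` ev ` Xa)"
proof
  have "ev ` Xa \<subseteq> carrier E" using ev by auto
  then show "\<pi> ` ev ` Xa \<subseteq> carrier G" "generate G (\<pi> ` ev ` Xa) = carrier G"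
    using pi.generate_img ev_generate pi_surj by auto
qed

definition length_factor :: nat where
  "length_factor = (SOME K. \<forall>g\<in>carrier G. word_length G (\<pi> ` ev ` Xa) g \<le> K * wlen g)"

lemma word_length_image_gens_le:
  "g \<in> carrier G \<Longrightarrow> word_length G (\<pi> ` ev ` Xa) g \<le> length_factor * wlen g"
  using someI_ex[OF word_length_le_mult_word_length[OF image_gens_word_metric word_metric_axioms gens_finite]]
  unfolding length_factor_def by blast

definition jump_bound :: nat where
  "jump_bound = Max ((\<lambda>x. wlen (\<pi> (ev x))) ` Xa)"

definition morse_bound :: real where
  "morse_bound = morse_const (real jump_bound) (lam * real length_factor) \<delta>"

definition rho_word :: "'g \<Rightarrow> 'x list" where
  "rho_word a = (SOME w. w \<in> lists Xa \<and> \<pi> (eval_word E ev w) = a \<and> \<rho> a = word_cost w)"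

definition rho_word_point :: "'g \<Rightarrow> nat \<Rightarrow> 'g" where
  "rho_word_point a i = \<pi> (eval_word E ev (take i (rho_word a)))"

lemma rho_word:
  "a \<in> carrier G \<Longrightarrow> rho_word a \<in> lists Xa \<and> \<pi> (eval_word E ev (rho_word a)) = a \<and> \<rho> a = word_cost (rho_word a)"
  unfolding rho_word_def by (rule someI_ex) (rule rho_attained)

lemma rho_word_prefix_lists: "a \<in> carrier G \<Longrightarrow> take i (rho_word a) \<in> lists Xa"
  using rho_word[of a] by (auto dest: in_set_takeD)

lemma rho_word_point_closed: "a \<in> carrier G \<Longrightarrow> rho_word_point a i \<in> carrier G"
  unfolding rho_word_point_def using rho_word_prefix_lists eval_word_lists_closed by simp

lemma rho_word_point_Suc:
  assumes a: "a \<in> carrier G" and i: "i < length (rho_word a)"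
  shows "rho_word_point a (Suc i) = rho_word_point a i \<otimes>\<^bsub>G\<^esub> \<pi> (ev (rho_word a ! i))"
proof -
  have "rho_word a ! i \<in> Xa" using rho_word[OF a] i by auto
  then have "ev (rho_word a ! i) \<in> carrier E" "take i (rho_word a) \<in> lists Xa"
    using ev_closed rho_word_prefix_lists[OF a] by auto
  then show ?thesis
    using i unfolding rho_word_point_def
    by (simp add: take_Suc_conv_app_nth E.eval_word_append ev_word_closed eval_word_lists_closed)
qed

lemma rho_word_path:
  assumes b: "\<beta> \<in> carrier G" and a: "a \<in> carrier G"
  shows "coarse_quasigeodesic (\<lambda>i. \<beta> \<otimes>\<^bsub>G\<^esub> rho_word_point a i) (length (rho_word a)) jump_bound
           (lam * real length_factor)"
  unfolding coarse_quasigeodesic_def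
proof (intro conjI allI impI)
  fix i show "\<beta> \<otimes>\<^bsub>G\<^esub> rho_word_point a i \<in> carrier G" using b a rho_word_point_closed by simp
next
  fix i assume i: "i < length (rho_word a)"
  have w: "rho_word a \<in> lists Xa" using rho_word[OF a] by blast
  then have x: "rho_word a ! i \<in> Xa" using i by auto
  then have "\<pi> (ev (rho_word a ! i)) \<in> carrier G" using ev_closed by simp
  then have "wdist (rho_word_point a i) (rho_word_point a (Suc i)) = wlen (\<pi> (ev (rho_word a ! i)))"
    using rho_word_point_closed[OF a] by (simp add: rho_word_point_Suc[OF a i] word_dist_def)
  also have "\<dots> \<le> jump_bound" unfolding jump_bound_def using letters_finite x by (intro Max_ge) auto
  finally show "wdist (\<beta> \<otimes>\<^bsub>G\<^esub> rho_word_point a i) (\<beta> \<otimes>\<^bsub>G\<^esub> rho_word_point a (Suc i)) \<le> jump_bound"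
    using word_dist_mult_left b rho_word_point_closed[OF a] by simp
next
  fix i j assume ij: "i \<le> j" "j \<le> length (rho_word a)"
  let ?T = "\<pi> ` ev ` Xa"
  have w: "rho_word a \<in> lists Xa" "\<pi> (eval_word E ev (rho_word a)) = a" "\<rho> a = word_cost (rho_word a)"
    using rho_word[OF a] by auto
  then have "quasigeodesic_word G ?T (\<pi> \<circ> ev) lam 0 (rho_word a)"
    using rho_words_quasigeodesic a by (auto simp: word_cost_def)
  moreover have "eval_word G (\<pi> \<circ> ev) (take k (rho_word a)) = rho_word_point a k" for k
    unfolding rho_word_point_def using w(1) ev by (subst pi.eval_word_hom) (auto dest: in_set_takeD)
  ultimately have "real (j - i) \<le> lam * real (word_dist G ?T (rho_word_point a i) (rho_word_point a j))"
    unfolding quasigeodesic_word_def using ij by auto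
  also have "\<dots> \<le> lam * (real length_factor * real (wdist (rho_word_point a i) (rho_word_point a j)))"
    using word_length_image_gens_le rho_word_point_closed[OF a] lam_pos
    by (simp add: word_dist_def flip: of_nat_mult)
  finally show "real (j - i) \<le> lam * real length_factor *
      real (wdist (\<beta> \<otimes>\<^bsub>G\<^esub> rho_word_point a i) (\<beta> \<otimes>\<^bsub>G\<^esub> rho_word_point a j))"
    using word_dist_mult_left b rho_word_point_closed[OF a] by (simp add: mult.assoc)
qed

lemma near_rho_word_point:
  assumes b: "\<beta> \<in> carrier G" and a: "a \<in> carrier G" and q: "q = \<beta> \<otimes>\<^bsub>G\<^esub> a"
    and near: "near_geodesic x \<beta> q r" and x: "x \<in> carrier G"
  shows "\<exists>i \<le> length (rho_word a). real (wdist x (\<beta> \<otimes>\<^bsub>G\<^esub> rho_word_point a i)) \<le> morse_bound + r"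
proof -
  obtain \<gamma> s where \<gamma>: "geodesic \<gamma> \<beta> q" "s \<le> wdist \<beta> q" "real (wdist x (\<gamma> s)) \<le> r"
    using near by (auto simp: near_geodesic_def)
  have ends: "\<beta> \<otimes>\<^bsub>G\<^esub> rho_word_point a 0 = \<beta>" "\<beta> \<otimes>\<^bsub>G\<^esub> rho_word_point a (length (rho_word a)) = q"
    using b a q rho_word[OF a] by (auto simp: rho_word_point_def)
  obtain i where i: "i \<le> length (rho_word a)"
    "real (wdist (\<gamma> s) (\<beta> \<otimes>\<^bsub>G\<^esub> rho_word_point a i)) \<le> morse_bound"
    using geodesic_near_quasigeodesic[OF rho_word_path[OF b a] ends _ \<gamma>(1) b _ \<gamma>(2)] lam_pos a b q
    unfolding morse_bound_def by auto
  have "wdist x (\<beta> \<otimes>\<^bsub>G\<^esub> rho_word_point a i) \<le> wdist x (\<gamma> s) + wdist (\<gamma> s) (\<beta> \<otimes>\<^bsub>G\<^esub> rho_word_point a i)"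
    using word_dist_triangle x geodesic_closed[OF \<gamma>(1,2)] b rho_word_point_closed[OF a] by simp
  then show ?thesis using i \<gamma>(3) by (intro exI[of _ i]) auto
qed

definition Finv_letter_bound :: int where
  "Finv_letter_bound = Max (insert 0 (rho.Finv ` letters))"

lemma Finv_letter_bound_nonneg: "Finv_letter_bound \<ge> 0"
  unfolding Finv_letter_bound_def using gens_finite by (intro Max_ge) auto

lemma Finv_le_word_length:
  assumes "k \<in> carrier G"
  shows "rho.Finv k \<le> Finv_letter_bound * int (wlen k)"
proof -
  have "rho.Finv (word_prod G ws) \<le> Finv_letter_bound * int (length ws)" if "set ws \<subseteq> letters" for ws
    using that
  proof (induction ws)
    case Nil
    then show ?case by (simp add: rho.Finv_one)
  next
    case (Cons b ws)
    have "b \<in> letters" "set ws \<subseteq> carrier G" using Cons.prems letters_closed by auto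
    then have "b \<in> carrier G" "word_prod G ws \<in> carrier G"
      using letters_closed G.eval_word_closed[of "\<lambda>a. a" ws] by auto
    then have "rho.Finv (word_prod G (b # ws)) \<le> rho.Finv b + rho.Finv (word_prod G ws)"
      using rho.Finv_mult_le by simp
    also have "\<dots> \<le> Finv_letter_bound + Finv_letter_bound * int (length ws)"
      using Cons \<open>b \<in> letters\<close> gens_finite unfolding Finv_letter_bound_def by (intro add_mono Max_ge) auto
    finally show ?case by (simp add: algebra_simps)
  qed
  then show ?thesis using shortest_word_exists[OF assms] by metis
qed

text \<open>Near a geodesic from \<open>\<beta>\<close> to \<open>\<beta> a\<close> there is a point \<open>\<beta> p\<close> with \<open>p\<close> a prefix of the maximal
  word for \<open>a\<close>; there the split defect vanishes, and moving the split point to \<open>x\<close> costs at most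
  \<open>Finv\<close> of the short connecting element.\<close>

lemma split_defect_near_geodesic:
  assumes b: "\<beta> \<in> carrier G" and a: "a \<in> carrier G" and x: "x \<in> carrier G" and q: "q = \<beta> \<otimes>\<^bsub>G\<^esub> a"
    and near: "near_geodesic x \<beta> q r"
  shows "real_of_int (rho.split_defect (inv\<^bsub>G\<^esub> \<beta> \<otimes>\<^bsub>G\<^esub> x) a) \<le> Finv_letter_bound * (morse_bound + r)"
proof -
  obtain i where i: "i \<le> length (rho_word a)"
    and d: "real (wdist x (\<beta> \<otimes>\<^bsub>G\<^esub> rho_word_point a i)) \<le> morse_bound + r"
    using near_rho_word_point[OF b a q near x] by blast
  define u where "u = inv\<^bsub>G\<^esub> \<beta> \<otimes>\<^bsub>G\<^esub> x"
  define p where "p = rho_word_point a i"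
  define k where "k = inv\<^bsub>G\<^esub> u \<otimes>\<^bsub>G\<^esub> p"
  have closed: "u \<in> carrier G" "p \<in> carrier G" "k \<in> carrier G"
    using b x rho_word_point_closed[OF a] by (auto simp: u_def p_def k_def)
  have "rho.split_defect p a = 0"
    using split_defect_prefix_zero[of "rho_word a" a i] rho_word[OF a] a by (simp add: p_def rho_word_point_def)
  then have "rho.split_defect u a \<le> rho.Finv k"
    using rho.split_defect_le_Finv[of u k a] closed a by (simp add: k_def)
  moreover have "\<beta> \<otimes>\<^bsub>G\<^esub> u = x" using b x by (simp add: u_def)
  then have "wdist x (\<beta> \<otimes>\<^bsub>G\<^esub> p) = wlen k"
    using word_dist_mult_left[OF b closed(1,2)] by (simp add: word_dist_def k_def)
  ultimately have "rho.split_defect u a \<le> Finv_letter_bound * int (wdist x (\<beta> \<otimes>\<^bsub>G\<^esub> p))"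
    using Finv_le_word_length[OF closed(3)] by simp
  then have "real_of_int (rho.split_defect u a) \<le> Finv_letter_bound * real (wdist x (\<beta> \<otimes>\<^bsub>G\<^esub> p))"
    by (metis of_int_le_iff of_int_mult of_int_of_nat_eq)
  also have "\<dots> \<le> Finv_letter_bound * (morse_bound + r)"
    using d Finv_letter_bound_nonneg by (intro mult_left_mono) (auto simp: p_def)
  finally show ?thesis by (simp add: u_def)
qed

lemma Finv_defect_bound:
  assumes g: "g \<in> carrier G" and h: "h \<in> carrier G"
  shows "\<bar>real_of_int (rho.Finv g + rho.Finv h - rho.Finv (g \<otimes>\<^bsub>G\<^esub> h) - 2 * rho_cocycle g h)\<bar>
           \<le> 3 * (Finv_letter_bound * (morse_bound + (4 * \<delta> + 1)))"
proof -
  let ?B = "Finv_letter_bound * (morse_bound + (4 * \<delta> + 1))"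
  have gh: "g \<otimes>\<^bsub>G\<^esub> h \<in> carrier G" using g h by simp
  obtain x where x: "x \<in> carrier G" and near: "near_geodesic x \<one>\<^bsub>G\<^esub> g (4 * \<delta> + 1)"
    "near_geodesic x g (g \<otimes>\<^bsub>G\<^esub> h) (4 * \<delta> + 1)" "near_geodesic x \<one>\<^bsub>G\<^esub> (g \<otimes>\<^bsub>G\<^esub> h) (4 * \<delta> + 1)"
    using geodesic_triangle_centre[of "\<one>\<^bsub>G\<^esub>" g "g \<otimes>\<^bsub>G\<^esub> h"] g gh by auto
  have near': "near_geodesic x g \<one>\<^bsub>G\<^esub> (4 * \<delta> + 1)" "near_geodesic x (g \<otimes>\<^bsub>G\<^esub> h) g (4 * \<delta> + 1)"
    "near_geodesic x (g \<otimes>\<^bsub>G\<^esub> h) \<one>\<^bsub>G\<^esub> (4 * \<delta> + 1)"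
    using near near_geodesic_sym g gh by auto
  have bound: "0 \<le> rho.split_defect (inv\<^bsub>G\<^esub> \<beta> \<otimes>\<^bsub>G\<^esub> x) a \<and> real_of_int (rho.split_defect (inv\<^bsub>G\<^esub> \<beta> \<otimes>\<^bsub>G\<^esub> x) a) \<le> ?B"
    if "\<beta> \<in> carrier G" "a \<in> carrier G" "q = \<beta> \<otimes>\<^bsub>G\<^esub> a" "near_geodesic x \<beta> q (4 * \<delta> + 1)" for \<beta> a q
    using split_defect_near_geodesic[OF that(1,2) x that(3,4)] rho.nonneg that x
    by (simp add: rho.split_defect_def)
  have "0 \<le> rho.split_defect x g \<and> real_of_int (rho.split_defect x g) \<le> ?B"
    using bound[of "\<one>\<^bsub>G\<^esub>" g g] near g x by simp
  moreover have "0 \<le> rho.split_defect (inv\<^bsub>G\<^esub> g \<otimes>\<^bsub>G\<^esub> x) (inv\<^bsub>G\<^esub> g) \<and>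
      real_of_int (rho.split_defect (inv\<^bsub>G\<^esub> g \<otimes>\<^bsub>G\<^esub> x) (inv\<^bsub>G\<^esub> g)) \<le> ?B"
    using bound[of g "inv\<^bsub>G\<^esub> g" "\<one>\<^bsub>G\<^esub>"] near' g by simp
  moreover have "0 \<le> rho.split_defect (inv\<^bsub>G\<^esub> g \<otimes>\<^bsub>G\<^esub> x) h \<and>
      real_of_int (rho.split_defect (inv\<^bsub>G\<^esub> g \<otimes>\<^bsub>G\<^esub> x) h) \<le> ?B"
    using bound[of g h "g \<otimes>\<^bsub>G\<^esub> h"] near g h by simp
  moreover have "0 \<le> rho.split_defect (inv\<^bsub>G\<^esub> (g \<otimes>\<^bsub>G\<^esub> h) \<otimes>\<^bsub>G\<^esub> x) (inv\<^bsub>G\<^esub> h) \<and>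
      real_of_int (rho.split_defect (inv\<^bsub>G\<^esub> (g \<otimes>\<^bsub>G\<^esub> h) \<otimes>\<^bsub>G\<^esub> x) (inv\<^bsub>G\<^esub> h)) \<le> ?B"
    using bound[of "g \<otimes>\<^bsub>G\<^esub> h" "inv\<^bsub>G\<^esub> h" g] near' g h by (simp add: G.m_assoc)
  moreover have "0 \<le> rho.split_defect x (g \<otimes>\<^bsub>G\<^esub> h) \<and> real_of_int (rho.split_defect x (g \<otimes>\<^bsub>G\<^esub> h)) \<le> ?B"
    using bound[of "\<one>\<^bsub>G\<^esub>" "g \<otimes>\<^bsub>G\<^esub> h" "g \<otimes>\<^bsub>G\<^esub> h"] near gh x by simp
  moreover have "0 \<le> rho.split_defect (inv\<^bsub>G\<^esub> (g \<otimes>\<^bsub>G\<^esub> h) \<otimes>\<^bsub>G\<^esub> x) (inv\<^bsub>G\<^esub> (g \<otimes>\<^bsub>G\<^esub> h)) \<and>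
      real_of_int (rho.split_defect (inv\<^bsub>G\<^esub> (g \<otimes>\<^bsub>G\<^esub> h) \<otimes>\<^bsub>G\<^esub> x) (inv\<^bsub>G\<^esub> (g \<otimes>\<^bsub>G\<^esub> h))) \<le> ?B"
    using bound[of "g \<otimes>\<^bsub>G\<^esub> h" "inv\<^bsub>G\<^esub> (g \<otimes>\<^bsub>G\<^esub> h)" "\<one>\<^bsub>G\<^esub>"] near' gh by simp
  ultimately show ?thesis unfolding rho.Finv_defect_eq[OF x g h] by (simp add: abs_le_iff)
qed

lemma qmap_coboundary_bounded:
  "\<exists>M::rat. \<forall>g\<in>carrier G. \<forall>h\<in>carrier G. \<exists>t::rat.
     iotaQ E \<iota> t = inv\<^bsub>EQ E \<iota>\<^esub> (qmap G E \<iota> \<rho> (g \<otimes>\<^bsub>G\<^esub> h)) \<otimes>\<^bsub>EQ E \<iota>\<^esub> qmap G E \<iota> \<rho> g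
                    \<otimes>\<^bsub>EQ E \<iota>\<^esub> qmap G E \<iota> \<rho> h \<and> \<bar>t\<bar> \<le> M"
proof (rule exI[of _ "of_int \<lfloor>3 * (Finv_letter_bound * (morse_bound + (4 * \<delta> + 1)))\<rfloor> / 2"],
    intro ballI)
  let ?N = "\<lfloor>3 * (Finv_letter_bound * (morse_bound + (4 * \<delta> + 1)))\<rfloor>"
  fix g h assume g: "g \<in> carrier G" and h: "h \<in> carrier G"
  let ?d = "rho.Finv g + rho.Finv h - rho.Finv (g \<otimes>\<^bsub>G\<^esub> h) - 2 * rho_cocycle g h"
  have "\<bar>?d\<bar> \<le> ?N" using Finv_defect_bound[OF g h] by (simp add: le_floor_iff)
  then have "\<bar>of_int ?d / 2 :: rat\<bar> \<le> of_int ?N / 2" by (simp flip: of_int_abs)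
  then show "\<exists>t. iotaQ E \<iota> t = inv\<^bsub>EQ E \<iota>\<^esub> (qmap G E \<iota> \<rho> (g \<otimes>\<^bsub>G\<^esub> h)) \<otimes>\<^bsub>EQ E \<iota>\<^esub> qmap G E \<iota> \<rho> g
                    \<otimes>\<^bsub>EQ E \<iota>\<^esub> qmap G E \<iota> \<rho> h \<and> \<bar>t\<bar> \<le> of_int ?N / 2"
    using qmap_coboundary[OF g h] by metis
qed

end

theorem proposition3p4:
  fixes G :: "('g,'n) monoid_scheme" and E :: "('e,'m) monoid_scheme"
    and \<iota> :: "int \<Rightarrow> 'e" and \<pi> :: "'e \<Rightarrow> 'g"
    and Xa :: "'x set" and ev :: "'x \<Rightarrow> 'e" and C :: int and \<rho> :: "'g \<Rightarrow> 'e"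
  assumes hyp: "hyperbolic_group G"
    and ext: "central_extension E G \<iota> \<pi>"
    and finX: "finite Xa"
    and ev: "ev \<in> Xa \<rightarrow> carrier E"
    and sym: "\<forall>x\<in>Xa. inv\<^bsub>E\<^esub> (ev x) \<in> ev ` Xa"
    and gen: "generate E (ev ` Xa) = carrier E"
    and Cpos: "C > 0"
    and rho_max: "\<forall>g\<in>carrier G. is_fibre_max E \<iota> (\<rho> g) (cost_set E \<iota> \<pi> Xa ev C g)"
    and qgeo: "\<exists>lam::real. lam > 0 \<and>
       (\<forall>g\<in>carrier G. \<forall>w\<in>lists Xa.
          \<pi> (eval_word E ev w) = g \<and>
          eval_word E ev w \<otimes>\<^bsub>E\<^esub> \<iota> (- C * int (length w)) = \<rho> g \<longrightarrow>
          quasigeodesic_word G (\<pi> ` ev ` Xa) (\<pi> \<circ> ev) lam 0 w)"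
  shows "\<exists>M::rat. \<forall>g\<in>carrier G. \<forall>h\<in>carrier G. \<exists>t::rat.
           iotaQ E \<iota> t =
             inv\<^bsub>EQ E \<iota>\<^esub> (qmap G E \<iota> \<rho> (g \<otimes>\<^bsub>G\<^esub> h)) \<otimes>\<^bsub>EQ E \<iota>\<^esub> qmap G E \<iota> \<rho> g
               \<otimes>\<^bsub>EQ E \<iota>\<^esub> qmap G E \<iota> \<rho> h
           \<and> \<bar>t\<bar> \<le> M"
proof -
  obtain S \<delta> where S: "finite S" "S \<subseteq> carrier G" "generate G S = carrier G" and "group G"
    and four_point: "\<forall>w\<in>carrier G. \<forall>x\<in>carrier G. \<forall>y\<in>carrier G. \<forall>z\<in>carrier G.
       gromov_product G S w x z \<ge> min (gromov_product G S w x y) (gromov_product G S w y z) - \<delta>"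
    using hyp unfolding hyperbolic_group_def by blast
  obtain lam :: real where "lam > 0" and lam: "\<forall>g\<in>carrier G. \<forall>w\<in>lists Xa.
       \<pi> (eval_word E ev w) = g \<and> eval_word E ev w \<otimes>\<^bsub>E\<^esub> \<iota> (- C * int (length w)) = \<rho> g \<longrightarrow>
       quasigeodesic_word G (\<pi> ` ev ` Xa) (\<pi> \<circ> ev) lam 0 w"
    using qgeo by blast
  interpret hyperbolic_max_section G E \<iota> \<pi> Xa ev C \<rho> S "max \<delta> 0" lam
  proof (intro hyperbolic_max_section.intro max_section.intro hyperbolic_word_metric.intro
      word_metric.intro word_metric_axioms.intro hyperbolic_word_metric_axioms.intro
      hyperbolic_max_section_axioms.intro)
    show "\<And>w x y z. w \<in> carrier G \<Longrightarrow> x \<in> carrier G \<Longrightarrow> y \<in> carrier G \<Longrightarrow> z \<in> carrier G \<Longrightarrow>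
        min (gromov_product G S w x y) (gromov_product G S w y z) - max \<delta> 0 \<le> gromov_product G S w x z"
      using four_point by fastforce
  qed (use S \<open>group G\<close> ext ev rho_max finX \<open>lam > 0\<close> gen lam in auto)
  show ?thesis by (rule qmap_coboundary_bounded)
qed

end
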